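(* Let $G$ be a locally compact group and $1<p<\infty$. If there exists $u\neq 0$ in $B_p(G)$ such that the multiplication operator $\Gamma_u:A_p(G)\to A_p(G)$, $\Gamma_u(v)=uv$, is weakly compact (in particular, if it is compact), then $G$ is discrete.
   Context: For $1<p<\infty$ and $\frac1p+\frac1q=1$, the Herz algebra $A_p(G)$ is the space of functions $u=\sum_{i=1}^\infty g_i*f_i^{\vee}$ with $f_i\in L^p(G)$, $g_i\in L^q(G)$, $\sum_i\|f_i\|_p\|g_i\|_q<\infty$, where $f^\vee(x)=f(x^{-1})$ and convolution is with respect to a left Haar measure; it is a commutative Banach algebra under pointwise multiplication with norm $\|u\|_{A_p}=\inf\sum_i\|f_i\|_p\|g_i\|_q$. $B_p(G)$ is the set of bounded continuous functions $u$ on $G$ with $uv\in A_p(G)$ for all $v\in A_p(G)$, normed by $\|u\|=\sup\{\|uv\|_{A_p}:\|v\|_{A_p}\le 1\}$. *)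

theory Defs
  imports "HOL-Analysis.Analysis"
begin

text \<open>Groups are written additively (Isabelle class group_add, NOT assumed commutative):
  x + y is the group product, -x the inverse, 0 the identity.\<close>

definition lc_group :: "'a::{topological_group_add, t2_space} itself \<Rightarrow> bool" where
  "lc_group _ \<longleftrightarrow> locally_compact_space (euclidean :: 'a topology)"

definition left_haar :: "'a::{topological_group_add, t2_space} measure \<Rightarrow> bool" where
  "left_haar \<mu> \<longleftrightarrow>
     sets \<mu> = sets borel \<and>
     (\<forall>x A. A \<in> sets borel \<longrightarrow> emeasure \<mu> ((\<lambda>y. x + y) ` A) = emeasure \<mu> A) \<and>
     (\<forall>K. compact K \<longrightarrow> emeasure \<mu> K < \<infinity>) \<and>
     (\<forall>U. open U \<and> U \<noteq> {} \<longrightarrow> emeasure \<mu> U > 0) \<and>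
     (\<forall>A \<in> sets borel. emeasure \<mu> A = (INF U \<in> {U. open U \<and> A \<subseteq> U}. emeasure \<mu> U)) \<and>
     (\<forall>U. open U \<longrightarrow> emeasure \<mu> U = (SUP K \<in> {K. compact K \<and> K \<subseteq> U}. emeasure \<mu> K))"

definition in_Lp :: "'a measure \<Rightarrow> real \<Rightarrow> ('a \<Rightarrow> complex) \<Rightarrow> bool" where
  "in_Lp \<mu> p f \<longleftrightarrow> f \<in> borel_measurable \<mu> \<and> integrable \<mu> (\<lambda>x. norm (f x) powr p)"

definition Lp_norm :: "'a measure \<Rightarrow> real \<Rightarrow> ('a \<Rightarrow> complex) \<Rightarrow> real" where
  "Lp_norm \<mu> p f = (\<integral>x. norm (f x) powr p \<partial>\<mu>) powr (1 / p)"

definition check :: "('a::group_add \<Rightarrow> 'b) \<Rightarrow> 'a \<Rightarrow> 'b" where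
  "check f x = f (- x)"

definition conv :: "'a::group_add measure \<Rightarrow> ('a \<Rightarrow> complex) \<Rightarrow> ('a \<Rightarrow> complex) \<Rightarrow> 'a \<Rightarrow> complex" where
  "conv \<mu> f g x = (\<integral>y. f y * g (- y + x) \<partial>\<mu>)"

definition conj_exp :: "real \<Rightarrow> real" where
  "conj_exp p = p / (p - 1)"

definition Ap_rep :: "'a::group_add measure \<Rightarrow> real \<Rightarrow> ('a \<Rightarrow> complex)
    \<Rightarrow> (nat \<Rightarrow> 'a \<Rightarrow> complex) \<Rightarrow> (nat \<Rightarrow> 'a \<Rightarrow> complex) \<Rightarrow> bool" where
  "Ap_rep \<mu> p u f g \<longleftrightarrow>
     (\<forall>i. in_Lp \<mu> p (f i) \<and> in_Lp \<mu> (conj_exp p) (g i)) \<and>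
     summable (\<lambda>i. Lp_norm \<mu> p (f i) * Lp_norm \<mu> (conj_exp p) (g i)) \<and>
     (\<forall>x. u x = (\<Sum>i. conv \<mu> (g i) (check (f i)) x))"

definition Ap :: "'a::group_add measure \<Rightarrow> real \<Rightarrow> ('a \<Rightarrow> complex) set" where
  "Ap \<mu> p = {u. \<exists>f g. Ap_rep \<mu> p u f g}"

definition Ap_norm :: "'a::group_add measure \<Rightarrow> real \<Rightarrow> ('a \<Rightarrow> complex) \<Rightarrow> real" where
  "Ap_norm \<mu> p u = Inf {\<Sum>i. Lp_norm \<mu> p (f i) * Lp_norm \<mu> (conj_exp p) (g i) | f g. Ap_rep \<mu> p u f g}"

definition Bp :: "'a::{topological_group_add} measure \<Rightarrow> real \<Rightarrow> ('a \<Rightarrow> complex) set" where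
  "Bp \<mu> p = {u. continuous_on UNIV u \<and> bounded (range u) \<and>
                 (\<forall>v \<in> Ap \<mu> p. (\<lambda>x. u x * v x) \<in> Ap \<mu> p)}"

definition Ap_dual :: "'a::group_add measure \<Rightarrow> real \<Rightarrow> (('a \<Rightarrow> complex) \<Rightarrow> complex) set" where
  "Ap_dual \<mu> p = {\<phi>.
     (\<forall>v \<in> Ap \<mu> p. \<forall>w \<in> Ap \<mu> p. \<forall>a b::complex.
        \<phi> (\<lambda>x. a * v x + b * w x) = a * \<phi> v + b * \<phi> w) \<and>
     (\<exists>C. \<forall>v \<in> Ap \<mu> p. norm (\<phi> v) \<le> C * Ap_norm \<mu> p v)}"

definition Ap_weak :: "'a::group_add measure \<Rightarrow> real \<Rightarrow> ('a \<Rightarrow> complex) topology" where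
  "Ap_weak \<mu> p = topology_generated_by
     {{v \<in> Ap \<mu> p. \<phi> v \<in> U} | \<phi> U. \<phi> \<in> Ap_dual \<mu> p \<and> open U}"

definition Ap_weakly_compact_op :: "'a::group_add measure \<Rightarrow> real
    \<Rightarrow> (('a \<Rightarrow> complex) \<Rightarrow> ('a \<Rightarrow> complex)) \<Rightarrow> bool" where
  "Ap_weakly_compact_op \<mu> p T \<longleftrightarrow>
     compactin (Ap_weak \<mu> p) (Ap_weak \<mu> p closure_of (T ` {v \<in> Ap \<mu> p. Ap_norm \<mu> p v \<le> 1}))"

end

theory Submission
  imports Defs
begin

text \<open>
  Suppose multiplication by \<open>u\<close>, with \<open>u x0 \<noteq> 0\<close>, is weakly compact on \<open>A\<^sub>p(G)\<close>.
  For a neighbourhood \<open>V\<close> of \<open>0\<close> of finite measure, the bump \<open>(1\<^bsub>x0 + V\<^esub> / \<bar>V\<bar>) * 1\<^sub>V\<^sup>\<or>\<close>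
  lies in the unit ball of \<open>A\<^sub>p(G)\<close>, takes the value 1 at \<open>x0\<close> and vanishes at every \<open>x\<close> with
  \<open>(x0 + V) \<inter> (x + V) = {}\<close>. Weak compactness gives a common weak cluster point \<open>w\<close> of the products
  of \<open>u\<close> with these bumps as \<open>V\<close> shrinks. Point evaluations are bounded functionals on \<open>A\<^sub>p(G)\<close>,
  so \<open>w x0 = u x0 \<noteq> 0\<close> while \<open>w\<close> vanishes off \<open>x0\<close>. Elements of \<open>A\<^sub>p(G)\<close> are continuous,
  because translation is continuous in \<open>L\<^sup>p\<close> (by density of \<open>C\<^sub>c\<close>), hence \<open>{x0}\<close> is open and
  \<open>G\<close> is discrete.
\<close>

section \<open>Preliminaries on \<open>L\<^sup>p\<close> spaces\<close>

lemma conj_exp_gt_1: "1 < p \<Longrightarrow> 1 < conj_exp p"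
  by (simp add: conj_exp_def)

lemma conj_exp_conjugate: "1 < p \<Longrightarrow> 1/p + 1/conj_exp p = 1"
  by (simp add: conj_exp_def field_simps)

lemma Holder_inequality_nondegenerate:
  fixes f g :: "'b \<Rightarrow> real"
  assumes pq: "1 < p" "1 < q" "1/p + 1/q = 1"
    and fgm: "(\<lambda>x. f x * g x) \<in> borel_measurable M"
    and f0: "\<And>x. 0 \<le> f x" and g0: "\<And>x. 0 \<le> g x"
    and fi: "integrable M (\<lambda>x. f x powr p)" and gi: "integrable M (\<lambda>x. g x powr q)"
    and A: "0 < (\<integral>x. f x powr p \<partial>M)" and B: "0 < (\<integral>x. g x powr q \<partial>M)"
  shows "integrable M (\<lambda>x. f x * g x)"
    and "(\<integral>x. f x * g x \<partial>M) \<le> (\<integral>x. f x powr p \<partial>M) powr (1/p) * (\<integral>x. g x powr q \<partial>M) powr (1/q)"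
proof -
  define a where "a = (\<integral>x. f x powr p \<partial>M) powr (1/p)"
  define b where "b = (\<integral>x. g x powr q \<partial>M) powr (1/q)"
  have ab: "0 < a" "0 < b" "a powr p = (\<integral>x. f x powr p \<partial>M)" "b powr q = (\<integral>x. g x powr q \<partial>M)"
    using A B pq by (auto simp: a_def b_def powr_powr)
  define h where "h x = a * b * (f x powr p / (p * a powr p) + g x powr q / (q * b powr q))" for x
  have Young: "f x * g x \<le> h x" for x
  proof -
    have "(f x / a) * (g x / b) \<le> (f x / a) powr p / p + (g x / b) powr q / q"
      using Youngs_inequality[of p q "f x / a" "g x / b"] pq f0 g0 ab by auto
    also have "\<dots> = f x powr p / (p * a powr p) + g x powr q / (q * b powr q)"
      using f0 g0 ab by (simp add: powr_divide mult.commute)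
    finally show ?thesis
      using ab by (simp add: h_def field_simps)
  qed
  have h_int: "integrable M h"
    unfolding h_def using fi gi by auto
  have "norm (f x * g x) \<le> norm (h x)" for x
    using Young[of x] mult_nonneg_nonneg[OF f0 g0, of x x]
    by (auto simp: abs_of_nonneg intro: order_trans[OF _ abs_ge_self])
  then show fg_int: "integrable M (\<lambda>x. f x * g x)"
    using fgm by (intro Bochner_Integration.integrable_bound[OF h_int]) auto
  have "(\<integral>x. f x * g x \<partial>M) \<le> (\<integral>x. h x \<partial>M)"
    by (rule integral_mono[OF fg_int h_int Young])
  also have "\<dots> = a * b * (1/p + 1/q)"
    using fi gi A B ab by (simp add: h_def)
  finally show "(\<integral>x. f x * g x \<partial>M) \<le> (\<integral>x. f x powr p \<partial>M) powr (1/p) * (\<integral>x. g x powr q \<partial>M) powr (1/q)"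
    using pq by (simp add: a_def b_def)
qed

lemma Holder_inequality:
  fixes f g :: "'b \<Rightarrow> real"
  assumes pq: "1 < p" "1 < q" "1/p + 1/q = 1"
    and fm: "f \<in> borel_measurable M" and gm: "g \<in> borel_measurable M"
    and f0: "\<And>x. 0 \<le> f x" and g0: "\<And>x. 0 \<le> g x"
    and fi: "integrable M (\<lambda>x. f x powr p)" and gi: "integrable M (\<lambda>x. g x powr q)"
  shows "integrable M (\<lambda>x. f x * g x)"
    and "(\<integral>x. f x * g x \<partial>M) \<le> (\<integral>x. f x powr p \<partial>M) powr (1/p) * (\<integral>x. g x powr q \<partial>M) powr (1/q)"
proof -
  have fgm: "(\<lambda>x. f x * g x) \<in> borel_measurable M"
    using fm gm by measurable
  consider "(\<integral>x. f x powr p \<partial>M) = 0 \<or> (\<integral>x. g x powr q \<partial>M) = 0"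
    | "0 < (\<integral>x. f x powr p \<partial>M)" "0 < (\<integral>x. g x powr q \<partial>M)"
    using integral_nonneg_AE[of "\<lambda>x. f x powr p" M] integral_nonneg_AE[of "\<lambda>x. g x powr q" M]
    by fastforce
  then have "integrable M (\<lambda>x. f x * g x) \<and>
    (\<integral>x. f x * g x \<partial>M) \<le> (\<integral>x. f x powr p \<partial>M) powr (1/p) * (\<integral>x. g x powr q \<partial>M) powr (1/q)"
  proof cases
    case 1
    then have ae: "AE x in M. f x * g x = 0"
    proof
      assume "(\<integral>x. f x powr p \<partial>M) = 0"
      then have "AE x in M. f x powr p = 0"
        using integral_nonneg_eq_0_iff_AE[OF fi] by simp
      then show ?thesis
        by eventually_elim simp
    next
      assume "(\<integral>x. g x powr q \<partial>M) = 0"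
      then have "AE x in M. g x powr q = 0"
        using integral_nonneg_eq_0_iff_AE[OF gi] by simp
      then show ?thesis
        by eventually_elim simp
    qed
    have "integrable M (\<lambda>x. f x * g x)"
      using ae by (intro integrable_cong_AE_imp[OF integrable_zero fgm]) (auto elim: eventually_mono)
    moreover have "(\<integral>x. f x * g x \<partial>M) = 0"
      using integral_cong_AE[OF fgm _ ae] by simp
    ultimately show ?thesis
      by simp
  next
    case 2
    then show ?thesis
      using Holder_inequality_nondegenerate[OF pq fgm f0 g0 fi gi] by blast
  qed
  then show "integrable M (\<lambda>x. f x * g x)"
    and "(\<integral>x. f x * g x \<partial>M) \<le> (\<integral>x. f x powr p \<partial>M) powr (1/p) * (\<integral>x. g x powr q \<partial>M) powr (1/q)"
    by auto
qed

lemma borel_measurable_norm_powr: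
  "f \<in> borel_measurable M \<Longrightarrow> (\<lambda>x. norm (f x) powr p) \<in> borel_measurable M"
  using borel_measurable_continuous_on[OF continuous_on_norm_id]
  by (intro powr_real_measurable) auto

lemma in_Lp_measurable_powr: "in_Lp M p f \<Longrightarrow> (\<lambda>x. norm (f x) powr p) \<in> borel_measurable M"
  unfolding in_Lp_def by (intro borel_measurable_norm_powr) simp

lemma norm_powr_add_le:
  fixes x y :: "'b::real_normed_vector"
  assumes "0 < p"
  shows "norm (x + y) powr p \<le> 2 powr p * (norm x powr p + norm y powr p)"
proof -
  have "norm (x + y) powr p \<le> (2 * max (norm x) (norm y)) powr p"
    using assms norm_triangle_ineq[of x y] by (intro powr_mono2) auto
  also have "\<dots> = 2 powr p * max (norm x) (norm y) powr p"
    by (simp add: powr_mult)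
  also have "\<dots> \<le> 2 powr p * (norm x powr p + norm y powr p)"
    by (intro mult_left_mono) (auto simp: max_def)
  finally show ?thesis .
qed

lemma in_Lp_add:
  assumes "0 < p" and f: "in_Lp M p f" and g: "in_Lp M p g"
  shows "in_Lp M p (\<lambda>x. f x + g x)"
proof -
  have fgm: "(\<lambda>x. f x + g x) \<in> borel_measurable M"
    using f g by (auto simp: in_Lp_def)
  have bound: "integrable M (\<lambda>x. 2 powr p * (norm (f x) powr p + norm (g x) powr p))"
    using f g by (auto simp: in_Lp_def)
  have "norm (norm (f x + g x) powr p) \<le> norm (2 powr p * (norm (f x) powr p + norm (g x) powr p))" for x
    using norm_powr_add_le[OF \<open>0 < p\<close>, of "f x" "g x"] by simp
  then have "integrable M (\<lambda>x. norm (f x + g x) powr p)"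
    by (intro Bochner_Integration.integrable_bound[OF bound borel_measurable_norm_powr[OF fgm]] AE_I2)
  then show ?thesis
    using fgm by (simp add: in_Lp_def)
qed

lemma in_Lp_cmult:
  assumes "in_Lp M p f"
  shows "in_Lp M p (\<lambda>x. c * f x)"
proof -
  have "integrable M (\<lambda>x. norm c powr p * norm (f x) powr p)"
    using assms by (simp add: in_Lp_def)
  moreover have "(\<lambda>x. c * f x) \<in> borel_measurable M"
    using assms by (intro borel_measurable_times) (auto simp: in_Lp_def)
  ultimately show ?thesis
    by (simp add: in_Lp_def norm_mult powr_mult)
qed

lemma in_Lp_diff:
  assumes "0 < p" "in_Lp M p f" "in_Lp M p g"
  shows "in_Lp M p (\<lambda>x. f x - g x)"
  using in_Lp_add[OF assms(1,2) in_Lp_cmult[OF assms(3), of "-1"]] by simp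

lemma in_Lp_level_set_finite:
  assumes L: "in_Lp M p f" and "c \<noteq> 0"
  shows "emeasure M (f -` {c} \<inter> space M) < \<infinity>"
proof -
  have A: "f -` {c} \<inter> space M \<in> sets M"
    using L by (simp add: in_Lp_def borel_measurable_vimage)
  text \<open>On the level set the integrand \<open>\<bar>f\<bar>\<^sup>p\<close> equals \<open>\<bar>c\<bar>\<^sup>p > 0\<close>.\<close>
  have pointwise: "norm (indicator (f -` {c} \<inter> space M) x :: real) \<le> norm (norm (f x) powr p / norm c powr p)" for x
    using \<open>c \<noteq> 0\<close> by (auto simp: indicator_def)
  have bound: "integrable M (\<lambda>x. norm (f x) powr p / norm c powr p)"
    using L by (simp add: in_Lp_def)
  have "integrable M (indicator (f -` {c} \<inter> space M) :: 'a \<Rightarrow> real)"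
    by (rule Bochner_Integration.integrable_bound[OF bound borel_measurable_indicator[OF A] AE_I2[OF pointwise]])
  then show ?thesis
    using A by (simp add: integrable_indicator_iff less_top)
qed

lemma Lp_Holder:
  assumes p: "1 < p" and f: "in_Lp M p f" and g: "in_Lp M (conj_exp p) g"
  shows "integrable M (\<lambda>x. g x * f x)"
    and "(\<integral>x. norm (g x * f x) \<partial>M) \<le> Lp_norm M p f * Lp_norm M (conj_exp p) g"
proof -
  have fm: "f \<in> borel_measurable M" and gm: "g \<in> borel_measurable M"
    using f g by (auto simp: in_Lp_def)
  note H = Holder_inequality[OF p conj_exp_gt_1[OF p] conj_exp_conjugate[OF p],
      of "\<lambda>x. norm (f x)" M "\<lambda>x. norm (g x)", OF borel_measurable_continuous_on[OF continuous_on_norm_id fm]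
        borel_measurable_continuous_on[OF continuous_on_norm_id gm]
      norm_ge_zero norm_ge_zero]
  have int: "integrable M (\<lambda>x. norm (f x) * norm (g x))"
    and le: "(\<integral>x. norm (f x) * norm (g x) \<partial>M) \<le> Lp_norm M p f * Lp_norm M (conj_exp p) g"
    using H f g unfolding in_Lp_def Lp_norm_def by auto
  show "integrable M (\<lambda>x. g x * f x)"
    using fm gm by (intro Bochner_Integration.integrable_bound[OF int]) (auto simp: norm_mult)
  show "(\<integral>x. norm (g x * f x) \<partial>M) \<le> Lp_norm M p f * Lp_norm M (conj_exp p) g"
    using le by (simp add: norm_mult mult.commute)
qed

lemma Lp_norm_indicator:
  assumes A: "A \<in> sets M" "emeasure M A < \<infinity>" and "0 < p"
  shows "in_Lp M p (\<lambda>y. complex_of_real (c * indicator A y))"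
    and "Lp_norm M p (\<lambda>y. complex_of_real (c * indicator A y)) = \<bar>c\<bar> * measure M A powr (1/p)"
proof -
  have norm_eq: "norm (complex_of_real (c * indicator A y)) powr p = \<bar>c\<bar> powr p * indicator A y" for y
    using \<open>0 < p\<close> by (simp add: indicator_def)
  have "(\<lambda>y. complex_of_real (c * indicator A y)) \<in> borel_measurable M"
    using A(1) by (intro borel_measurable_continuous_on[OF continuous_on_of_real_id]) simp
  then show "in_Lp M p (\<lambda>y. complex_of_real (c * indicator A y))"
    unfolding in_Lp_def norm_eq using A by (simp add: integrable_indicator_iff less_top)
  show "Lp_norm M p (\<lambda>y. complex_of_real (c * indicator A y)) = \<bar>c\<bar> * measure M A powr (1/p)"
    unfolding Lp_norm_def norm_eq using A \<open>0 < p\<close> by (simp add: less_top powr_mult powr_powr)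
qed

text \<open>The \<open>p\<close>-th power of the \<open>L\<^sup>p\<close> distance. Its quasi-triangle inequality below
  replaces Minkowski's inequality throughout.\<close>

definition Lp_dist_powr :: "'a measure \<Rightarrow> real \<Rightarrow> ('a \<Rightarrow> complex) \<Rightarrow> ('a \<Rightarrow> complex) \<Rightarrow> real" where
  "Lp_dist_powr M p f g = (\<integral>x. norm (f x - g x) powr p \<partial>M)"

lemma Lp_dist_powr_nonneg: "0 \<le> Lp_dist_powr M p f g"
  by (simp add: Lp_dist_powr_def)

lemma Lp_dist_powr_commute: "Lp_dist_powr M p f g = Lp_dist_powr M p g f"
  by (simp add: Lp_dist_powr_def norm_minus_commute)

lemma Lp_norm_diff: "Lp_norm M p (\<lambda>x. f x - g x) = Lp_dist_powr M p f g powr (1/p)"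
  by (simp add: Lp_norm_def Lp_dist_powr_def)

lemma Lp_dist_powr_cmult:
  "Lp_dist_powr M p (\<lambda>x. c * f x) (\<lambda>x. c * g x) = norm c powr p * Lp_dist_powr M p f g"
  by (simp add: Lp_dist_powr_def norm_mult powr_mult flip: right_diff_distrib)

lemma Lp_dist_powr_triangle:
  assumes "0 < p" and f: "in_Lp M p f" and g: "in_Lp M p g" and h: "in_Lp M p h"
  shows "Lp_dist_powr M p f h \<le> 2 powr p * (Lp_dist_powr M p f g + Lp_dist_powr M p g h)"
proof -
  have int: "integrable M (\<lambda>x. norm (a x - b x) powr p)"
    if "in_Lp M p a" "in_Lp M p b" for a b
    using in_Lp_diff[OF \<open>0 < p\<close> that] by (simp add: in_Lp_def)
  have pointwise: "norm (f x - h x) powr p \<le> 2 powr p * (norm (f x - g x) powr p + norm (g x - h x) powr p)" for x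
    using norm_powr_add_le[OF \<open>0 < p\<close>, of "f x - g x" "g x - h x"] by simp
  have "Lp_dist_powr M p f h \<le> (\<integral>x. 2 powr p * (norm (f x - g x) powr p + norm (g x - h x) powr p) \<partial>M)"
    unfolding Lp_dist_powr_def
    using int[OF f h] int[OF f g] int[OF g h] pointwise by (intro integral_mono) auto
  also have "\<dots> = 2 powr p * (Lp_dist_powr M p f g + Lp_dist_powr M p g h)"
    using int[OF f g] int[OF g h] by (simp add: Lp_dist_powr_def)
  finally show ?thesis .
qed

lemma quasi_triangle_bound:
  fixes a b e p :: real
  assumes "a < e / (2 * 2 powr p)" and "b < e / (2 * 2 powr p)"
  shows "2 powr p * (a + b) < e"
proof -
  have "2 powr p * (a + b) < 2 powr p * (e / (2 * 2 powr p) + e / (2 * 2 powr p))"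
    using assms by (intro mult_strict_left_mono) auto
  then show ?thesis
    by simp
qed

lemma powr_le_mult_powr:
  fixes a b c p :: real
  assumes "0 \<le> a" "a \<le> c * b" "0 \<le> c" "0 \<le> b" "0 < p"
  shows "a powr p \<le> c powr p * b powr p"
  using powr_mono2[of p a "c * b"] assms by (simp add: powr_mult)

lemma Lp_dominated_convergence:
  fixes f :: "'a \<Rightarrow> complex"
  assumes "0 < p" and L: "in_Lp M p f" and Sm: "\<And>i. S i \<in> borel_measurable M"
    and lim: "\<And>x. x \<in> space M \<Longrightarrow> (\<lambda>i. S i x) \<longlonglongrightarrow> f x"
    and dom: "\<And>i x. x \<in> space M \<Longrightarrow> norm (S i x) \<le> c * norm (f x)"
  shows "(\<lambda>i. Lp_dist_powr M p f (S i)) \<longlonglongrightarrow> 0"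
proof -
  have fm: "f \<in> borel_measurable M" and fi: "integrable M (\<lambda>x. norm (f x) powr p)"
    using L by (auto simp: in_Lp_def)
  have "norm (norm (f x - S i x) powr p) \<le> (1 + \<bar>c\<bar>) powr p * norm (f x) powr p" if "x \<in> space M" for i x
  proof -
    have "norm (f x - S i x) \<le> (1 + \<bar>c\<bar>) * norm (f x)"
      using norm_triangle_ineq4[of "f x" "S i x"] dom[OF that, of i] abs_ge_self[of c]
        mult_right_mono[of c "\<bar>c\<bar>" "norm (f x)"] by (simp add: algebra_simps)
    then show ?thesis
      using powr_le_mult_powr[of "norm (f x - S i x)" "1 + \<bar>c\<bar>" "norm (f x)"] \<open>0 < p\<close> by simp
  qed
  then have "(\<lambda>i. \<integral>x. norm (f x - S i x) powr p \<partial>M) \<longlonglongrightarrow> (\<integral>x. 0 \<partial>M)"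
  proof (intro integral_dominated_convergence[where w="\<lambda>x. (1 + \<bar>c\<bar>) powr p * norm (f x) powr p"] AE_I2)
    show "(\<lambda>x. norm (f x - S i x) powr p) \<in> borel_measurable M" for i
      using fm Sm by (intro borel_measurable_norm_powr borel_measurable_diff)
    fix x
    assume "x \<in> space M"
    then have "(\<lambda>i. norm (f x - S i x)) \<longlonglongrightarrow> 0"
      using tendsto_diff[OF tendsto_const[of "f x"] lim[of x]] by (simp add: tendsto_norm_zero)
    then show "(\<lambda>i. norm (f x - S i x) powr p) \<longlonglongrightarrow> 0"
      using \<open>0 < p\<close> by (intro tendsto_zero_powrI[OF _ tendsto_const]) auto
  qed (use fi in auto)
  then show ?thesis
    by (simp add: Lp_dist_powr_def)
qed

lemma simple_dense_in_Lp:
  fixes f :: "'a \<Rightarrow> complex"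
  assumes "0 < p" and L: "in_Lp M p f" and "0 < \<epsilon>"
  obtains S where "simple_function M S" "in_Lp M p S" "Lp_dist_powr M p f S < \<epsilon>"
proof -
  have fm: "f \<in> borel_measurable M" and fi: "integrable M (\<lambda>x. norm (f x) powr p)"
    using L by (auto simp: in_Lp_def)
  obtain S where S: "\<And>i. simple_function M (S i)" "\<And>x. x \<in> space M \<Longrightarrow> (\<lambda>i. S i x) \<longlonglongrightarrow> f x"
    and S_dist: "\<And>i x. x \<in> space M \<Longrightarrow> dist (S i x) 0 \<le> 2 * dist (f x) 0"
    using borel_measurable_implies_sequence_metric[OF fm, of 0] by blast
  have S_le: "norm (S i x) \<le> 2 * norm (f x)" if "x \<in> space M" for i x
    using S_dist[OF that, of i] by simp
  have Sm: "S i \<in> borel_measurable M" for i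
    by (rule borel_measurable_simple_function[OF S(1)])
  have SL: "in_Lp M p (S i)" for i
  proof -
    have bound: "integrable M (\<lambda>x. 2 powr p * norm (f x) powr p)"
      using fi by simp
    have "AE x in M. norm (norm (S i x) powr p) \<le> norm (2 powr p * norm (f x) powr p)"
      using powr_le_mult_powr[OF norm_ge_zero S_le _ norm_ge_zero \<open>0 < p\<close>] by (intro AE_I2) simp
    then have "integrable M (\<lambda>x. norm (S i x) powr p)"
      by (rule Bochner_Integration.integrable_bound[OF bound borel_measurable_norm_powr[OF Sm]])
    then show ?thesis
      using Sm by (simp add: in_Lp_def)
  qed
  have "\<forall>\<^sub>F i in sequentially. Lp_dist_powr M p f (S i) < \<epsilon>"
    using order_tendstoD(2)[OF Lp_dominated_convergence[OF \<open>0 < p\<close> L Sm S(2) S_le]] \<open>0 < \<epsilon>\<close> by simp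
  then obtain i where "Lp_dist_powr M p f (S i) < \<epsilon>"
    by (auto simp: eventually_sequentially)
  then show thesis
    using that S(1) SL by blast
qed

lemma Hausdorff_space_euclidean_t2: "Hausdorff_space (euclidean :: 'a::t2_space topology)"
  unfolding Hausdorff_space_def disjnt_def
  by (simp add: open_openin[symmetric]) (metis hausdorff)

lemma locally_compact_obtain_compact_nhd:
  fixes x :: "'a::topological_space"
  assumes "locally_compact_space (euclidean :: 'a topology)"
  obtains U K where "open U" "compact K" "x \<in> U" "U \<subseteq> K"
proof -
  have "\<exists>U K. openin euclidean U \<and> compactin euclidean K \<and> x \<in> U \<and> U \<subseteq> K"
    using assms unfolding locally_compact_space_def by simp
  then show thesis
    using that by (auto simp: open_openin[symmetric] compactin_euclidean_iff)
qed

lemma Urysohn_locally_compact: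
  fixes K U :: "'a::t2_space set"
  assumes lc: "locally_compact_space (euclidean :: 'a topology)"
    and K: "compact K" and U: "open U" and KU: "K \<subseteq> U"
  obtains \<phi> :: "'a \<Rightarrow> real" and L where "continuous_on UNIV \<phi>" "\<And>x. 0 \<le> \<phi> x" "\<And>x. \<phi> x \<le> 1"
    "\<And>x. x \<in> K \<Longrightarrow> \<phi> x = 1" "compact L" "L \<subseteq> U" "\<And>x. x \<notin> L \<Longrightarrow> \<phi> x = 0"
proof -
  let ?U = "subtopology euclidean U"
  have "locally_compact_space ?U" "Hausdorff_space ?U"
    using locally_compact_space_open_subset[OF _ lc] open_openin U
      Hausdorff_space_euclidean_t2 Hausdorff_space_subtopology by blast+
  moreover have "compactin ?U K"
    using K KU by (simp add: compactin_subtopology compactin_euclidean_iff)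
  ultimately obtain W L where W: "openin ?U W" and L: "compactin ?U L" and KW: "K \<subseteq> W" and WL: "W \<subseteq> L"
    using locally_compact_space_compact_closed_compact[of ?U] by meson
  have "open W"
    using W U openin_open_trans by blast
  have L: "compact L" "L \<subseteq> U"
    using L by (auto simp: compactin_subtopology compactin_euclidean_iff)
  have "completely_regular_space (euclidean :: 'a topology)"
    using locally_compact_regular_imp_completely_regular_space[OF lc] Hausdorff_space_euclidean_t2 by blast
  moreover have "closedin euclidean (- W)"
    using \<open>open W\<close> by (simp add: closed_closedin[symmetric] open_closed[symmetric])
  ultimately obtain f where f: "continuous_map euclidean (top_of_set {0..1::real}) f"
    "f ` (- W) \<subseteq> {0}" "f ` K \<subseteq> {1}"
    using Urysohn_completely_regular_compact_closed[of 0 1 euclidean K "- W"] K KW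
    by (auto simp: compactin_euclidean_iff disjnt_def)
  have "continuous_on UNIV f" "\<And>x. f x \<in> {0..1}"
    using f(1) by (auto simp: continuous_map_in_subtopology continuous_map_iff_continuous2)
  then show thesis
    using that[of f L] f(2,3) WL L by force
qed

lemma eventually_nhds_tube:
  assumes "compact K" and "open W" and "{a} \<times> K \<subseteq> W"
  shows "\<forall>\<^sub>F t in nhds a. \<forall>y\<in>K. (t, y) \<in> W"
proof -
  obtain X where "a \<in> X" "open X" "X \<times> K \<subseteq> W"
    using Elementary_Topology.tube_lemma[OF assms] by blast
  then show ?thesis
    unfolding eventually_nhds by (intro exI[of _ X]) blast
qed

lemma compactin_directed_Inter_nonempty:
  assumes S: "compactin X S" and closed: "\<And>i. i \<in> I \<Longrightarrow> closedin X (F i)"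
    and directed: "\<And>J. finite J \<Longrightarrow> J \<subseteq> I \<Longrightarrow> \<exists>i\<in>I. F i \<subseteq> \<Inter> (F ` J) \<and> S \<inter> F i \<noteq> {}"
  shows "S \<inter> \<Inter> (F ` I) \<noteq> {}"
proof -
  have "S \<inter> \<Inter> \<F> \<noteq> {}" if fin: "finite \<F>" and sub: "\<F> \<subseteq> F ` I" for \<F>
  proof -
    obtain J where J: "J \<subseteq> I" "finite J" "\<F> = F ` J"
      using finite_subset_image[OF fin sub] by blast
    then obtain i where "F i \<subseteq> \<Inter> \<F>" "S \<inter> F i \<noteq> {}"
      using directed by blast
    then show ?thesis
      by blast
  qed
  then show ?thesis
    using S closed unfolding compactin_fip by blast
qed

lemma open_singletons_if_open_singleton:
  fixes x0 x :: "'a::topological_group_add"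
  assumes "open {x0}"
  shows "open {x}"
proof -
  have "(x0 - x) + y = x0 \<longleftrightarrow> y = x" for y
    by (metis add_left_cancel diff_add_cancel)
  then have "{x} = (\<lambda>y. (x0 - x) + y) -` {x0}"
    by auto
  then show ?thesis
    using assms by (simp add: open_vimage continuous_intros)
qed

definition Cc :: "('a::topological_space \<Rightarrow> complex) \<Rightarrow> bool" where
  "Cc \<phi> \<longleftrightarrow> continuous_on UNIV \<phi> \<and> (\<exists>L. compact L \<and> (\<forall>z. z \<notin> L \<longrightarrow> \<phi> z = 0))"

lemma Cc_zero: "Cc (\<lambda>x. 0)"
  unfolding Cc_def by (auto intro!: exI[of _ "{}"])

lemma Cc_add: "Cc \<phi> \<Longrightarrow> Cc \<psi> \<Longrightarrow> Cc (\<lambda>x. \<phi> x + \<psi> x)"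
  unfolding Cc_def
proof (elim conjE exE, intro conjI continuous_intros)
  fix L1 L2
  assume "compact L1" "\<forall>z. z \<notin> L1 \<longrightarrow> \<phi> z = 0" "compact L2" "\<forall>z. z \<notin> L2 \<longrightarrow> \<psi> z = 0"
  then show "\<exists>L. compact L \<and> (\<forall>z. z \<notin> L \<longrightarrow> \<phi> z + \<psi> z = 0)"
    by (intro exI[of _ "L1 \<union> L2"]) auto
qed

lemma Cc_cmult: "Cc \<phi> \<Longrightarrow> Cc (\<lambda>x. c * \<phi> x)"
  unfolding Cc_def by (auto intro: continuous_intros)

lemma Cc_translation_uniformly_continuous:
  fixes \<phi> :: "'a::topological_group_add \<Rightarrow> complex"
  assumes "Cc \<phi>" and "0 < \<epsilon>"
  shows "\<forall>\<^sub>F t in nhds 0. \<forall>y. norm (\<phi> (t + y) - \<phi> y) < \<epsilon>"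
proof -
  obtain L where cont: "continuous_on UNIV \<phi>" and L: "compact L" and vanish: "\<And>z. z \<notin> L \<Longrightarrow> \<phi> z = 0"
    using assms(1) unfolding Cc_def by blast
  have cont_comp: "continuous_on UNIV (\<lambda>z::'a \<times> 'a. \<phi> (g z))" if "continuous_on UNIV g" for g
    using continuous_on_compose2[OF cont that] by simp
  have "continuous_on UNIV (\<lambda>z::'a \<times> 'a. \<phi> (fst z + snd z))"
    "continuous_on UNIV (\<lambda>z::'a \<times> 'a. \<phi> (- fst z + snd z))"
    "continuous_on UNIV (\<lambda>z::'a \<times> 'a. \<phi> (snd z))"
    by (intro cont_comp continuous_intros)+
  note cont_pair = this
  define W where "W = {z. norm (\<phi> (fst z + snd z) - \<phi> (snd z)) < \<epsilon>}"
  define W' where "W' = {z. norm (\<phi> (snd z) - \<phi> (- fst z + snd z)) < \<epsilon>}"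
  have "open W"
    unfolding W_def using cont_pair by (intro open_Collect_less continuous_intros)
  moreover have "open W'"
    unfolding W'_def using cont_pair by (intro open_Collect_less continuous_intros)
  moreover have "{0} \<times> L \<subseteq> W" "{0} \<times> L \<subseteq> W'"
    unfolding W_def W'_def using \<open>0 < \<epsilon>\<close> by auto
  text \<open>One tube handles \<open>y \<in> L\<close>, the other \<open>t + y \<in> L\<close>; otherwise both values vanish.\<close>
  ultimately have "\<forall>\<^sub>F t in nhds 0. (\<forall>y\<in>L. (t, y) \<in> W) \<and> (\<forall>z\<in>L. (t, z) \<in> W')"
    by (intro eventually_conj eventually_nhds_tube[OF L])
  then show ?thesis
  proof eventually_elim
    case (elim t)
    show ?case
    proof
      fix y
      show "norm (\<phi> (t + y) - \<phi> y) < \<epsilon>"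
      proof (cases "y \<in> L \<or> t + y \<in> L")
        case True
        then show ?thesis
          using elim by (auto simp: W_def W'_def add.assoc[symmetric])
      next
        case False
        then show ?thesis
          using vanish \<open>0 < \<epsilon>\<close> by simp
      qed
    qed
  qed
qed

section \<open>Density of \<open>C\<^sub>c\<close> in \<open>L\<^sup>p\<close> of a Radon measure\<close>

locale lc_radon =
  fixes \<mu> :: "'a::t2_space measure"
  assumes locally_compact: "locally_compact_space (euclidean :: 'a topology)"
    and sets_eq_borel: "sets \<mu> = sets borel"
    and emeasure_compact_finite: "compact K \<Longrightarrow> emeasure \<mu> K < \<infinity>"
    and outer_regular: "A \<in> sets borel \<Longrightarrow> emeasure \<mu> A = (INF U \<in> {U. open U \<and> A \<subseteq> U}. emeasure \<mu> U)"
    and inner_regular: "open U \<Longrightarrow> emeasure \<mu> U = (SUP K \<in> {K. compact K \<and> K \<subseteq> U}. emeasure \<mu> K)"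
begin

lemma space_eq [simp]: "space \<mu> = UNIV"
  using sets_eq_imp_space_eq[OF sets_eq_borel] by simp

lemma measurable_iff_borel: "f \<in> borel_measurable \<mu> \<longleftrightarrow> f \<in> borel_measurable borel"
  by (simp add: measurable_cong_sets[OF sets_eq_borel refl])

lemma continuous_imp_measurable: "continuous_on UNIV f \<Longrightarrow> f \<in> borel_measurable \<mu>"
  using measurable_iff_borel borel_measurable_continuous_onI by blast

lemma integrable_indicator_compact: "compact K \<Longrightarrow> integrable \<mu> (indicator K :: 'a \<Rightarrow> real)"
  using emeasure_compact_finite sets_eq_borel by (simp add: integrable_indicator_iff borel_compact)

lemma Cc_in_Lp:
  assumes "Cc \<phi>" and "0 < p"
  shows "in_Lp \<mu> p \<phi>"
proof -
  obtain L where cont: "continuous_on UNIV \<phi>" and L: "compact L" and vanish: "\<And>z. z \<notin> L \<Longrightarrow> \<phi> z = 0"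
    using assms(1) unfolding Cc_def by blast
  obtain M where M: "\<And>z. z \<in> L \<Longrightarrow> norm (\<phi> z) \<le> M"
    using compact_imp_bounded[OF compact_continuous_image[OF continuous_on_subset[OF cont] L]]
    by (auto simp: bounded_iff)
  have bound: "norm (norm (\<phi> z) powr p) \<le> norm (max M 0 powr p * indicator L z)" for z
    using M[of z] vanish[of z] \<open>0 < p\<close> by (cases "z \<in> L") (auto intro!: powr_mono2)
  have "integrable \<mu> (\<lambda>z. norm (\<phi> z) powr p)"
    using Bochner_Integration.integrable_mult_right[OF integrable_indicator_compact[OF L]]
      borel_measurable_norm_powr[OF continuous_imp_measurable[OF cont]]
    by (rule Bochner_Integration.integrable_bound[OF _ _ AE_I2[OF bound]])
  then show ?thesis
    using continuous_imp_measurable[OF cont] by (simp add: in_Lp_def)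
qed

lemma outer_regular_approx:
  assumes B: "B \<in> sets borel" and fin: "emeasure \<mu> B < \<infinity>" and e: "0 < e"
  obtains U where "open U" "B \<subseteq> U" "emeasure \<mu> U < \<infinity>" "measure \<mu> U < measure \<mu> B + e"
proof -
  have eB: "emeasure \<mu> B = ennreal (measure \<mu> B)"
    using fin by (intro emeasure_eq_ennreal_measure) simp
  have "(INF U \<in> {U. open U \<and> B \<subseteq> U}. emeasure \<mu> U) < ennreal (measure \<mu> B + e)"
    unfolding outer_regular[OF B, symmetric] eB using e by (simp add: ennreal_lessI)
  then obtain U where U: "open U" "B \<subseteq> U" "emeasure \<mu> U < ennreal (measure \<mu> B + e)"
    by (auto simp: INF_less_iff)
  then have fin_U: "emeasure \<mu> U < \<infinity>"
    using order.strict_trans[OF U(3) ennreal_less_top] by simp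
  moreover have "emeasure \<mu> U = ennreal (measure \<mu> U)"
    using fin_U by (intro emeasure_eq_ennreal_measure) simp
  ultimately have "measure \<mu> U < measure \<mu> B + e"
    using U(3) by (simp add: ennreal_less_iff)
  then show thesis
    using that U fin_U by blast
qed

lemma inner_regular_approx:
  assumes U: "open U" and fin: "emeasure \<mu> U < \<infinity>" and e: "0 < e"
  obtains K where "compact K" "K \<subseteq> U" "measure \<mu> U < measure \<mu> K + e"
proof (cases "measure \<mu> U < e")
  case True
  then show thesis
    using that[of "{}"] by simp
next
  case False
  have eU: "emeasure \<mu> U = ennreal (measure \<mu> U)"
    using fin by (intro emeasure_eq_ennreal_measure) simp
  have "ennreal (measure \<mu> U - e) < (SUP K \<in> {K. compact K \<and> K \<subseteq> U}. emeasure \<mu> K)"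
    unfolding inner_regular[OF U, symmetric] eU using e False by (intro ennreal_lessI) auto
  then obtain K where K: "compact K" "K \<subseteq> U" "ennreal (measure \<mu> U - e) < emeasure \<mu> K"
    by (auto simp: less_SUP_iff)
  have "emeasure \<mu> K = ennreal (measure \<mu> K)"
    using emeasure_compact_finite[OF K(1)] by (intro emeasure_eq_ennreal_measure) simp
  then have "measure \<mu> U - e < measure \<mu> K"
    using K(3) False by (simp add: ennreal_less_iff)
  then show thesis
    using that K by auto
qed

definition Cc_approximable :: "real \<Rightarrow> ('a \<Rightarrow> complex) \<Rightarrow> bool" where
  "Cc_approximable p f \<longleftrightarrow> in_Lp \<mu> p f \<and> (\<forall>\<epsilon>>0. \<exists>\<phi>. Cc \<phi> \<and> Lp_dist_powr \<mu> p f \<phi> < \<epsilon>)"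

lemma Cc_approximable_zero: "0 < p \<Longrightarrow> Cc_approximable p (\<lambda>x. 0)"
  unfolding Cc_approximable_def using Cc_in_Lp[OF Cc_zero] Cc_zero by (auto simp: Lp_dist_powr_def)

lemma Cc_approximable_add:
  assumes "0 < p" and f: "Cc_approximable p f" and g: "Cc_approximable p g"
  shows "Cc_approximable p (\<lambda>x. f x + g x)"
  unfolding Cc_approximable_def
proof (intro conjI allI impI)
  have fL: "in_Lp \<mu> p f" and gL: "in_Lp \<mu> p g"
    using f g by (auto simp: Cc_approximable_def)
  show "in_Lp \<mu> p (\<lambda>x. f x + g x)"
    using \<open>0 < p\<close> fL gL by (rule in_Lp_add)
  fix \<epsilon> :: real
  assume "0 < \<epsilon>"
  then have \<delta>: "0 < \<epsilon> / (2 * 2 powr p)"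
    by simp
  obtain \<phi> \<psi> where \<phi>: "Cc \<phi>" "Lp_dist_powr \<mu> p f \<phi> < \<epsilon> / (2 * 2 powr p)"
    and \<psi>: "Cc \<psi>" "Lp_dist_powr \<mu> p g \<psi> < \<epsilon> / (2 * 2 powr p)"
    using f g \<delta> unfolding Cc_approximable_def by blast
  have "Lp_dist_powr \<mu> p (\<lambda>x. f x + g x) (\<lambda>x. \<phi> x + \<psi> x)
      \<le> 2 powr p * (Lp_dist_powr \<mu> p (\<lambda>x. f x + g x) (\<lambda>x. \<phi> x + g x)
                    + Lp_dist_powr \<mu> p (\<lambda>x. \<phi> x + g x) (\<lambda>x. \<phi> x + \<psi> x))"
    using Cc_in_Lp[OF \<phi>(1) \<open>0 < p\<close>] Cc_in_Lp[OF \<psi>(1) \<open>0 < p\<close>]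
    by (intro Lp_dist_powr_triangle \<open>0 < p\<close> in_Lp_add[OF \<open>0 < p\<close>] fL gL)
  also have "\<dots> = 2 powr p * (Lp_dist_powr \<mu> p f \<phi> + Lp_dist_powr \<mu> p g \<psi>)"
    by (simp add: Lp_dist_powr_def)
  also have "\<dots> < \<epsilon>"
    using \<phi>(2) \<psi>(2) by (rule quasi_triangle_bound)
  finally show "\<exists>h. Cc h \<and> Lp_dist_powr \<mu> p (\<lambda>x. f x + g x) h < \<epsilon>"
    using Cc_add[OF \<phi>(1) \<psi>(1)] by blast
qed

lemma Cc_approximable_cmult:
  assumes f: "Cc_approximable p f"
  shows "Cc_approximable p (\<lambda>x. c * f x)"
  unfolding Cc_approximable_def
proof (intro conjI allI impI)
  show "in_Lp \<mu> p (\<lambda>x. c * f x)"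
    using f by (intro in_Lp_cmult) (simp add: Cc_approximable_def)
  fix \<epsilon> :: real
  assume "0 < \<epsilon>"
  have pos: "0 < norm c powr p + 1"
    by (simp add: add_nonneg_pos)
  obtain \<phi> where \<phi>: "Cc \<phi>" "Lp_dist_powr \<mu> p f \<phi> < \<epsilon> / (norm c powr p + 1)"
    using f \<open>0 < \<epsilon>\<close> pos unfolding Cc_approximable_def by (meson divide_pos_pos)
  have "Lp_dist_powr \<mu> p (\<lambda>x. c * f x) (\<lambda>x. c * \<phi> x) \<le> (norm c powr p + 1) * Lp_dist_powr \<mu> p f \<phi>"
    unfolding Lp_dist_powr_cmult by (intro mult_right_mono Lp_dist_powr_nonneg) simp
  also have "\<dots> < \<epsilon>"
    using \<phi>(2) pos by (simp add: pos_less_divide_eq mult.commute)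
  finally show "\<exists>h. Cc h \<and> Lp_dist_powr \<mu> p (\<lambda>x. c * f x) h < \<epsilon>"
    using Cc_cmult[OF \<phi>(1)] by blast
qed

lemma compact_open_sandwich:
  assumes B: "B \<in> sets borel" and fin: "emeasure \<mu> B < \<infinity>" and "0 < \<epsilon>"
  obtains K U where "compact K" "open U" "K \<subseteq> U" "B \<subseteq> U"
    "U - (K \<inter> B) \<in> sets \<mu>" "emeasure \<mu> (U - (K \<inter> B)) < \<infinity>" "measure \<mu> (U - (K \<inter> B)) < \<epsilon>"
proof -
  obtain U where U: "open U" "B \<subseteq> U" "emeasure \<mu> U < \<infinity>" "measure \<mu> U < measure \<mu> B + \<epsilon> / 2"
    using outer_regular_approx[OF B fin] \<open>0 < \<epsilon>\<close> by (metis half_gt_zero)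
  obtain K where K: "compact K" "K \<subseteq> U" "measure \<mu> U < measure \<mu> K + \<epsilon> / 2"
    using inner_regular_approx[OF U(1,3)] \<open>0 < \<epsilon>\<close> by (metis half_gt_zero)
  have sets: "U \<in> sets \<mu>" "K \<in> sets \<mu>" "B \<in> sets \<mu>"
    using U(1) K(1) B sets_eq_borel by (auto simp: borel_compact)
  have fin_U: "emeasure \<mu> U \<noteq> \<infinity>" "emeasure \<mu> (U - K) \<noteq> \<infinity>" "emeasure \<mu> (U - B) \<noteq> \<infinity>"
    "emeasure \<mu> (U - (K \<inter> B)) \<noteq> \<infinity>"
    using U(3) emeasure_mono[of "U - K" U \<mu>] emeasure_mono[of "U - B" U \<mu>]
      emeasure_mono[of "U - (K \<inter> B)" U \<mu>] sets by auto
  have "measure \<mu> (U - (K \<inter> B)) = measure \<mu> ((U - K) \<union> (U - B))"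
    by (simp add: Diff_Int)
  also have "\<dots> \<le> measure \<mu> (U - K) + measure \<mu> (U - B)"
    using sets fin_U by (simp add: measure_subadditive)
  also have "\<dots> = (measure \<mu> U - measure \<mu> K) + (measure \<mu> U - measure \<mu> B)"
    using measure_Diff[of \<mu> U K] measure_Diff[of \<mu> U B] U(2) K(2) sets fin_U by simp
  also have "\<dots> < \<epsilon>"
    using U(4) K(3) by linarith
  finally show thesis
    using that K(1) U(1) K(2) U(2) sets fin_U by (simp add: less_top)
qed

lemma Cc_approximable_indicator:
  assumes p: "1 \<le> p" and B: "B \<in> sets borel" and fin: "emeasure \<mu> B < \<infinity>"
  shows "Cc_approximable p (\<lambda>x. complex_of_real (indicator B x))"
  unfolding Cc_approximable_def
proof (intro conjI allI impI)
  have norm_ind: "norm (complex_of_real (indicator B x)) powr p = indicator B x" for x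
    by (simp add: indicator_def)
  show L: "in_Lp \<mu> p (\<lambda>x. complex_of_real (indicator B x))"
    unfolding in_Lp_def norm_ind using B fin sets_eq_borel by (simp add: integrable_indicator_iff)
  fix \<epsilon> :: real
  assume "0 < \<epsilon>"
  then obtain K U where KU: "compact K" "open U" "K \<subseteq> U" "B \<subseteq> U"
    and D: "U - (K \<inter> B) \<in> sets \<mu>" "emeasure \<mu> (U - (K \<inter> B)) < \<infinity>" "measure \<mu> (U - (K \<inter> B)) < \<epsilon>"
    using compact_open_sandwich[OF B fin] by blast
  obtain \<phi> :: "'a \<Rightarrow> real" and L where \<phi>: "continuous_on UNIV \<phi>" "\<And>x. 0 \<le> \<phi> x" "\<And>x. \<phi> x \<le> 1"
    "\<And>x. x \<in> K \<Longrightarrow> \<phi> x = 1" "compact L" "L \<subseteq> U" "\<And>x. x \<notin> L \<Longrightarrow> \<phi> x = 0"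
    using Urysohn_locally_compact[OF locally_compact KU(1,2,3)] by blast
  define h where "h x = complex_of_real (\<phi> x)" for x
  have "continuous_on UNIV h"
    unfolding h_def by (intro continuous_intros \<phi>(1))
  then have "Cc h"
    unfolding Cc_def using \<phi>(5,7) by (auto simp: h_def)
  text \<open>\<open>h\<close> agrees with the indicator of \<open>B\<close> on \<open>K \<inter> B\<close> and outside \<open>U\<close>, and differs from it by at most 1.\<close>
  have pointwise: "norm (complex_of_real (indicator B x) - h x) powr p \<le> indicator (U - (K \<inter> B)) x" for x
  proof -
    define d where "d = \<bar>indicator B x - \<phi> x\<bar>"
    have "norm (complex_of_real (indicator B x) - h x) = d"
      unfolding d_def h_def by (simp only: of_real_diff[symmetric] norm_of_real)
    moreover have "0 \<le> d" "d \<le> 1"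
      using \<phi>(2,3)[of x] by (auto simp: d_def indicator_def)
    moreover have "x \<notin> U - (K \<inter> B) \<Longrightarrow> d = 0"
      using KU(4) \<phi>(4)[of x] \<phi>(6) \<phi>(7)[of x] by (auto simp: d_def indicator_def)
    ultimately show ?thesis
      using powr_le_one_le[of d p] p by (cases "d = 0") (auto simp: indicator_def)
  qed
  have "integrable \<mu> (\<lambda>x. norm (complex_of_real (indicator B x) - h x) powr p)"
    using in_Lp_diff[OF _ L Cc_in_Lp[OF \<open>Cc h\<close>]] p by (simp add: in_Lp_def)
  moreover have "integrable \<mu> (indicator (U - (K \<inter> B)) :: 'a \<Rightarrow> real)"
    using D by (simp add: integrable_indicator_iff)
  ultimately have "Lp_dist_powr \<mu> p (\<lambda>x. complex_of_real (indicator B x)) h \<le> (\<integral>x. indicator (U - (K \<inter> B)) x \<partial>\<mu>)"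
    unfolding Lp_dist_powr_def using pointwise by (rule integral_mono)
  also have "\<dots> < \<epsilon>"
    using D by (simp add: less_top)
  finally show "\<exists>h. Cc h \<and> Lp_dist_powr \<mu> p (\<lambda>x. complex_of_real (indicator B x)) h < \<epsilon>"
    using \<open>Cc h\<close> by blast
qed

lemma Cc_approximable_simple:
  assumes p: "1 \<le> p" and fin: "finite (range F)" and L: "in_Lp \<mu> p F"
  shows "Cc_approximable p F"
proof -
  define A where "A c = F -` {c}" for c
  have Am: "A c \<in> sets borel" for c
    using borel_measurable_vimage[of F \<mu> c] L sets_eq_borel by (simp add: A_def in_Lp_def)
  have level_set: "Cc_approximable p (\<lambda>x. c * complex_of_real (indicator (A c) x))" for c
  proof (cases "c = 0")
    case True
    then show ?thesis
      using Cc_approximable_zero p by simp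
  next
    case False
    then have "emeasure \<mu> (A c) < \<infinity>"
      using in_Lp_level_set_finite[OF L] by (simp add: A_def)
    then show ?thesis
      using Cc_approximable_cmult Cc_approximable_indicator[OF p Am] by blast
  qed
  have sums: "Cc_approximable p (\<lambda>x. \<Sum>c\<in>S. c * complex_of_real (indicator (A c) x))" if "finite S" for S
    using that
  proof (induction S rule: finite_induct)
    case empty
    then show ?case
      using Cc_approximable_zero p by simp
  next
    case (insert c S)
    then show ?case
      using Cc_approximable_add[OF _ level_set insert.IH] p by simp
  qed
  have "F = (\<lambda>x. \<Sum>c\<in>range F. c * complex_of_real (indicator (A c) x))"
  proof
    fix x
    have "(\<Sum>c\<in>range F. c * complex_of_real (indicator (A c) x)) = (\<Sum>c\<in>range F. if c = F x then F x else 0)"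
      by (rule sum.cong) (auto simp: A_def)
    also have "\<dots> = F x"
      using fin by (simp add: sum.delta)
    finally show "F x = (\<Sum>c\<in>range F. c * complex_of_real (indicator (A c) x))"
      by simp
  qed
  then show ?thesis
    using sums[OF fin] by simp
qed

lemma Cc_dense_in_Lp:
  assumes p: "1 \<le> p" and L: "in_Lp \<mu> p f" and "0 < \<epsilon>"
  obtains \<phi> where "Cc \<phi>" "Lp_dist_powr \<mu> p f \<phi> < \<epsilon>"
proof -
  have "0 < p" and \<delta>: "0 < \<epsilon> / (2 * 2 powr p)"
    using p \<open>0 < \<epsilon>\<close> by simp_all
  obtain S where S: "simple_function \<mu> S" "in_Lp \<mu> p S" "Lp_dist_powr \<mu> p f S < \<epsilon> / (2 * 2 powr p)"
    using simple_dense_in_Lp[OF \<open>0 < p\<close> L \<delta>] by blast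
  have "Cc_approximable p S"
    using Cc_approximable_simple[OF p _ S(2)] simple_functionD(1)[OF S(1)] by simp
  then obtain \<phi> where \<phi>: "Cc \<phi>" "Lp_dist_powr \<mu> p S \<phi> < \<epsilon> / (2 * 2 powr p)"
    using \<delta> unfolding Cc_approximable_def by blast
  have "Lp_dist_powr \<mu> p f \<phi> \<le> 2 powr p * (Lp_dist_powr \<mu> p f S + Lp_dist_powr \<mu> p S \<phi>)"
    by (rule Lp_dist_powr_triangle[OF \<open>0 < p\<close> L S(2) Cc_in_Lp[OF \<phi>(1) \<open>0 < p\<close>]])
  also have "\<dots> < \<epsilon>"
    using S(3) \<phi>(2) by (rule quasi_triangle_bound)
  finally show thesis
    using that \<phi>(1) by blast
qed

end

section \<open>Haar measure and continuity of translation\<close>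

locale lc_haar = lc_radon \<mu> for \<mu> :: "'a::{topological_group_add, t2_space} measure" +
  assumes emeasure_translate: "A \<in> sets borel \<Longrightarrow> emeasure \<mu> ((\<lambda>y. x + y) ` A) = emeasure \<mu> A"
    and emeasure_open_pos: "open U \<Longrightarrow> U \<noteq> {} \<Longrightarrow> 0 < emeasure \<mu> U"

lemma lc_haarI:
  fixes \<mu> :: "'a::{topological_group_add, t2_space} measure"
  assumes "lc_group TYPE('a)" and "left_haar \<mu>"
  shows "lc_haar \<mu>"
proof
  note H = assms(2)[unfolded left_haar_def]
  show "locally_compact_space (euclidean :: 'a topology)"
    using assms(1) by (simp add: lc_group_def)
  show "sets \<mu> = sets borel"
    using H by (elim conjE)
  show "emeasure \<mu> ((\<lambda>y. x + y) ` A) = emeasure \<mu> A" if "A \<in> sets borel" for x A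
    using H by (elim conjE) (use that in blast)
  show "emeasure \<mu> K < \<infinity>" if "compact K" for K
    using H by (elim conjE) (use that in blast)
  show "0 < emeasure \<mu> U" if "open U" "U \<noteq> {}" for U
    using H by (elim conjE) (use that in blast)
  have outer: "\<forall>A \<in> sets borel. emeasure \<mu> A = (INF U \<in> {U. open U \<and> A \<subseteq> U}. emeasure \<mu> U)"
    using H by (elim conjE)
  have inner: "\<forall>U. open U \<longrightarrow> emeasure \<mu> U = (SUP K \<in> {K. compact K \<and> K \<subseteq> U}. emeasure \<mu> K)"
    using H by (elim conjE)
  show "emeasure \<mu> A = (INF U \<in> {U. open U \<and> A \<subseteq> U}. emeasure \<mu> U)" if "A \<in> sets borel" for A
    using outer that by (rule bspec)
  show "emeasure \<mu> U = (SUP K \<in> {K. compact K \<and> K \<subseteq> U}. emeasure \<mu> K)" if "open U" for U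
    using inner[rule_format, OF that] .
qed

context lc_haar
begin

lemma measure_translate: "A \<in> sets borel \<Longrightarrow> measure \<mu> ((\<lambda>y. x + y) ` A) = measure \<mu> A"
  by (simp add: measure_def emeasure_translate)

lemma translate_measurable: "(\<lambda>y. a + y) \<in> measurable \<mu> \<mu>"
  using measurable_iff_borel[THEN iffD2, of "\<lambda>y. a + y"] measurable_cong_sets[OF sets_eq_borel sets_eq_borel]
  by (simp add: borel_measurable_continuous_onI continuous_intros)

lemma translate_sets:
  assumes "A \<in> sets \<mu>"
  shows "(\<lambda>z. a + z) ` A \<in> sets \<mu>"
proof -
  have "(\<lambda>z. a + z) ` A = (\<lambda>z. - a + z) -` A"
    by (auto simp: image_iff) (metis add_minus_cancel)
  then show ?thesis
    using measurable_sets[OF translate_measurable[of "- a"] assms] by simp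
qed

lemma distr_translate: "distr \<mu> \<mu> (\<lambda>y. a + y) = \<mu>"
proof (rule measure_eqI)
  fix A
  assume "A \<in> sets (distr \<mu> \<mu> (\<lambda>y. a + y))"
  then have A: "A \<in> sets borel" "A \<in> sets \<mu>"
    using sets_eq_borel by auto
  have "(\<lambda>y. a + y) -` A \<inter> space \<mu> = (\<lambda>y. - a + y) ` A"
    by (auto simp: image_iff) (metis add_minus_cancel)
  then show "emeasure (distr \<mu> \<mu> (\<lambda>y. a + y)) A = emeasure \<mu> A"
    using emeasure_distr[OF translate_measurable A(2)] emeasure_translate[OF A(1)] by simp
qed simp

lemma integral_translate:
  fixes f :: "'a \<Rightarrow> 'b::{banach, second_countable_topology}"
  assumes "f \<in> borel_measurable \<mu>"
  shows "(\<integral>y. f (a + y) \<partial>\<mu>) = (\<integral>y. f y \<partial>\<mu>)"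
  using integral_distr[OF translate_measurable assms, of a] by (simp add: distr_translate)

lemma integrable_translate:
  fixes f :: "'a \<Rightarrow> 'b::{banach, second_countable_topology}"
  assumes "f \<in> borel_measurable \<mu>"
  shows "integrable \<mu> (\<lambda>y. f (a + y)) \<longleftrightarrow> integrable \<mu> f"
  using integrable_distr_eq[OF translate_measurable assms, of a] by (simp add: distr_translate)

lemma in_Lp_translate:
  assumes "in_Lp \<mu> p f"
  shows "in_Lp \<mu> p (\<lambda>y. f (a + y))"
  using assms measurable_comp[OF translate_measurable, of f] integrable_translate[OF in_Lp_measurable_powr[OF assms]]
  by (simp add: in_Lp_def comp_def)

lemma Lp_norm_translate:
  assumes "f \<in> borel_measurable \<mu>"
  shows "Lp_norm \<mu> p (\<lambda>y. f (a + y)) = Lp_norm \<mu> p f"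
  unfolding Lp_norm_def using integral_translate[OF borel_measurable_norm_powr[OF assms]] by simp

lemma Lp_dist_powr_translate:
  assumes "f \<in> borel_measurable \<mu>" and "g \<in> borel_measurable \<mu>"
  shows "Lp_dist_powr \<mu> p (\<lambda>y. f (a + y)) (\<lambda>y. g (a + y)) = Lp_dist_powr \<mu> p f g"
  unfolding Lp_dist_powr_def using assms
  by (intro integral_translate[of "\<lambda>y. norm (f y - g y) powr p"] borel_measurable_norm_powr borel_measurable_diff)

lemma Lp_dist_powr_translate_le:
  assumes cont: "continuous_on UNIV \<phi>" and L: "compact L" and vanish: "\<And>z. z \<notin> L \<Longrightarrow> \<phi> z = 0"
    and "0 < p" and close: "\<And>y. norm (\<phi> (t + y) - \<phi> y) \<le> \<epsilon>"
  shows "Lp_dist_powr \<mu> p (\<lambda>y. \<phi> (t + y)) \<phi> \<le> \<epsilon> powr p * (2 * measure \<mu> L)"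
proof -
  define L' where "L' = (\<lambda>z. - t + z) ` L"
  have L': "compact L'" "measure \<mu> L' = measure \<mu> L"
    using L measure_translate[of L "- t"] by (auto simp: L'_def borel_compact
        intro!: compact_continuous_image continuous_intros)
  have pointwise: "norm (\<phi> (t + y) - \<phi> y) powr p \<le> \<epsilon> powr p * (indicator L y + indicator L' y)" for y
  proof (cases "y \<in> L \<or> y \<in> L'")
    case True
    then have "norm (\<phi> (t + y) - \<phi> y) powr p \<le> \<epsilon> powr p * 1"
      using close[of y] \<open>0 < p\<close> by (simp add: powr_mono2)
    also have "\<dots> \<le> \<epsilon> powr p * (indicator L y + indicator L' y)"
      using True by (intro mult_left_mono) (auto simp: indicator_def)
    finally show ?thesis .
  next
    case False
    then have "t + y \<notin> L"
      by (auto simp: L'_def image_iff intro: exI[of _ "t + y"])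
    then show ?thesis
      using False vanish by simp
  qed
  have bound: "integrable \<mu> (\<lambda>y. \<epsilon> powr p * (indicator L y + indicator L' y))"
    using integrable_indicator_compact[OF L] integrable_indicator_compact[OF L'(1)] by simp
  have "continuous_on UNIV (\<lambda>y. \<phi> (t + y))"
    using continuous_on_compose2[OF cont continuous_on_add[OF continuous_on_const continuous_on_id]] by simp
  then have meas: "(\<lambda>y. norm (\<phi> (t + y) - \<phi> y) powr p) \<in> borel_measurable \<mu>"
    using cont by (intro borel_measurable_norm_powr continuous_imp_measurable continuous_on_diff)
  have "norm (norm (\<phi> (t + y) - \<phi> y) powr p) \<le> norm (\<epsilon> powr p * (indicator L y + indicator L' y))" for y
    using pointwise[of y] by (auto intro: order_trans[OF _ abs_ge_self])
  then have int: "integrable \<mu> (\<lambda>y. norm (\<phi> (t + y) - \<phi> y) powr p)"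
    by (rule Bochner_Integration.integrable_bound[OF bound meas AE_I2])
  have "Lp_dist_powr \<mu> p (\<lambda>y. \<phi> (t + y)) \<phi> \<le> (\<integral>y. \<epsilon> powr p * (indicator L y + indicator L' y) \<partial>\<mu>)"
    unfolding Lp_dist_powr_def by (rule integral_mono[OF int bound pointwise])
  also have "\<dots> = \<epsilon> powr p * (2 * measure \<mu> L)"
    using integrable_indicator_compact[OF L] integrable_indicator_compact[OF L'(1)] L'(2)
      emeasure_compact_finite[OF L] emeasure_compact_finite[OF L'(1)] L L'(1) sets_eq_borel
    by (simp add: borel_compact less_top)
  finally show ?thesis .
qed

lemma Lp_translation_continuous_Cc:
  assumes "Cc \<phi>" and "0 < p" and "0 < e"
  shows "\<forall>\<^sub>F t in nhds 0. Lp_dist_powr \<mu> p (\<lambda>y. \<phi> (t + y)) \<phi> < e"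
proof -
  obtain L where cont: "continuous_on UNIV \<phi>" and L: "compact L" and vanish: "\<And>z. z \<notin> L \<Longrightarrow> \<phi> z = 0"
    using assms(1) unfolding Cc_def by blast
  define m where "m = measure \<mu> L"
  define \<epsilon> where "\<epsilon> = (e / (2 * (m + 1))) powr (1/p)"
  have "0 \<le> m"
    by (simp add: m_def)
  then have "0 < \<epsilon>" and \<epsilon>_powr: "\<epsilon> powr p = e / (2 * (m + 1))"
    using \<open>0 < e\<close> \<open>0 < p\<close> by (simp_all add: \<epsilon>_def powr_powr)
  show ?thesis
    using Cc_translation_uniformly_continuous[OF assms(1) \<open>0 < \<epsilon>\<close>]
  proof eventually_elim
    case (elim t)
    then have close: "norm (\<phi> (t + y) - \<phi> y) \<le> \<epsilon>" for y
      by (simp add: less_imp_le)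
    have "Lp_dist_powr \<mu> p (\<lambda>y. \<phi> (t + y)) \<phi> \<le> \<epsilon> powr p * (2 * m)"
      using Lp_dist_powr_translate_le[OF cont L vanish \<open>0 < p\<close> close] by (simp add: m_def)
    also have "\<dots> < e"
      using \<open>0 < e\<close> \<open>0 \<le> m\<close> by (simp add: \<epsilon>_powr field_simps)
    finally show ?case .
  qed
qed

lemma Lp_translation_continuous:
  assumes "1 \<le> p" and f: "in_Lp \<mu> p f"
  shows "((\<lambda>t. Lp_dist_powr \<mu> p (\<lambda>y. f (t + y)) f) \<longlongrightarrow> 0) (nhds 0)"
proof (rule order_tendstoI)
  show "\<forall>\<^sub>F t in nhds 0. a < Lp_dist_powr \<mu> p (\<lambda>y. f (t + y)) f" if "a < 0" for a
    by (intro always_eventually allI less_le_trans[OF that Lp_dist_powr_nonneg])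
  fix e :: real
  assume "0 < e"
  have "0 < p"
    using assms(1) by simp
  define e' where "e' = e / (2 * 2 powr p)"
  have "0 < e'"
    using \<open>0 < e\<close> by (simp add: e'_def)
  moreover have "1 \<le> 2 * 2 powr p"
    using ge_one_powr_ge_zero[of 2 p] \<open>0 < p\<close> by simp
  ultimately have "0 < e' / (2 * 2 powr p)" "e' / (2 * 2 powr p) \<le> e'"
    using divide_left_mono[of 1 "2 * 2 powr p" e'] by simp_all
  then obtain \<phi> where \<phi>: "Cc \<phi>" "Lp_dist_powr \<mu> p f \<phi> < e' / (2 * 2 powr p)"
    using Cc_dense_in_Lp[OF assms(1) f] by blast
  have \<phi>L: "in_Lp \<mu> p \<phi>"
    using Cc_in_Lp[OF \<phi>(1) \<open>0 < p\<close>] .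
  have fm: "f \<in> borel_measurable \<mu>" and \<phi>m: "\<phi> \<in> borel_measurable \<mu>"
    using f \<phi>L by (auto simp: in_Lp_def)
  show "\<forall>\<^sub>F t in nhds 0. Lp_dist_powr \<mu> p (\<lambda>y. f (t + y)) f < e"
    using Lp_translation_continuous_Cc[OF \<phi>(1) \<open>0 < p\<close> \<open>0 < e' / (2 * 2 powr p)\<close>]
  proof eventually_elim
    case (elim t)
    text \<open>Compare \<open>f(t + \<cdot>)\<close> with \<open>\<phi>(t + \<cdot>)\<close>, then \<open>\<phi>(t + \<cdot>)\<close> with \<open>\<phi>\<close> and \<open>\<phi>\<close> with \<open>f\<close>.\<close>
    have "Lp_dist_powr \<mu> p (\<lambda>y. f (t + y)) (\<lambda>y. \<phi> (t + y)) < e'"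
      using Lp_dist_powr_translate[OF fm \<phi>m] \<phi>(2) \<open>e' / (2 * 2 powr p) \<le> e'\<close> by simp
    moreover have "Lp_dist_powr \<mu> p (\<lambda>y. \<phi> (t + y)) f \<le> 2 powr p * (Lp_dist_powr \<mu> p (\<lambda>y. \<phi> (t + y)) \<phi> + Lp_dist_powr \<mu> p \<phi> f)"
      using Lp_dist_powr_triangle[OF \<open>0 < p\<close> in_Lp_translate[OF \<phi>L] \<phi>L f] .
    moreover have "\<dots> < e'"
      using elim \<phi>(2) by (intro quasi_triangle_bound) (simp_all add: Lp_dist_powr_commute)
    ultimately have "2 powr p * (Lp_dist_powr \<mu> p (\<lambda>y. f (t + y)) (\<lambda>y. \<phi> (t + y)) + Lp_dist_powr \<mu> p (\<lambda>y. \<phi> (t + y)) f) < e"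
      unfolding e'_def by (intro quasi_triangle_bound) auto
    with Lp_dist_powr_triangle[OF \<open>0 < p\<close> in_Lp_translate[OF f, of t] in_Lp_translate[OF \<phi>L, of t] f]
    show ?case
      by (rule le_less_trans)
  qed
qed

section \<open>The Herz algebra\<close>

lemma conv_check: "conv \<mu> g (check f) x = (\<integral>y. g y * f (- x + y) \<partial>\<mu>)"
  unfolding conv_def check_def by (simp only: minus_add minus_minus)

lemma conv_check_bound:
  assumes p: "1 < p" and f: "in_Lp \<mu> p f" and g: "in_Lp \<mu> (conj_exp p) g"
  shows "integrable \<mu> (\<lambda>y. g y * f (- x + y))"
    and "norm (conv \<mu> g (check f) x) \<le> Lp_norm \<mu> p f * Lp_norm \<mu> (conj_exp p) g"
proof -
  have f': "in_Lp \<mu> p (\<lambda>y. f (- x + y))"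
    using in_Lp_translate[OF f] .
  then show "integrable \<mu> (\<lambda>y. g y * f (- x + y))"
    using Lp_Holder(1)[OF p _ g] by blast
  have "norm (conv \<mu> g (check f) x) \<le> (\<integral>y. norm (g y * f (- x + y)) \<partial>\<mu>)"
    unfolding conv_check by (rule integral_norm_bound)
  also have "\<dots> \<le> Lp_norm \<mu> p f * Lp_norm \<mu> (conj_exp p) g"
    using Lp_Holder(2)[OF p f' g] f Lp_norm_translate by (simp add: in_Lp_def)
  finally show "norm (conv \<mu> g (check f) x) \<le> Lp_norm \<mu> p f * Lp_norm \<mu> (conj_exp p) g" .
qed

lemma conv_check_diff_bound:
  assumes p: "1 < p" and f: "in_Lp \<mu> p f" and g: "in_Lp \<mu> (conj_exp p) g"
  shows "norm (conv \<mu> g (check f) x - conv \<mu> g (check f) x0)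
    \<le> Lp_dist_powr \<mu> p (\<lambda>y. f ((- x + x0) + y)) f powr (1/p) * Lp_norm \<mu> (conj_exp p) g"
proof -
  define D where "D y = f (- x + y) - f (- x0 + y)" for y
  have DL: "in_Lp \<mu> p D"
    unfolding D_def using p by (intro in_Lp_diff in_Lp_translate f) simp
  have "conv \<mu> g (check f) x - conv \<mu> g (check f) x0 = (\<integral>y. g y * f (- x + y) - g y * f (- x0 + y) \<partial>\<mu>)"
    unfolding conv_check using conv_check_bound(1)[OF p f g] by simp
  also have "\<dots> = (\<integral>y. g y * D y \<partial>\<mu>)"
    by (simp add: D_def right_diff_distrib)
  finally have "norm (conv \<mu> g (check f) x - conv \<mu> g (check f) x0) \<le> (\<integral>y. norm (g y * D y) \<partial>\<mu>)"
    by (simp add: integral_norm_bound)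
  also have "\<dots> \<le> Lp_norm \<mu> p D * Lp_norm \<mu> (conj_exp p) g"
    by (rule Lp_Holder(2)[OF p DL g])
  also have "Lp_norm \<mu> p D = Lp_norm \<mu> p (\<lambda>y. D (x0 + y))"
    using DL by (simp add: Lp_norm_translate in_Lp_def)
  also have "\<dots> = Lp_dist_powr \<mu> p (\<lambda>y. f ((- x + x0) + y)) f powr (1/p)"
    by (simp add: D_def add.assoc Lp_norm_diff)
  finally show ?thesis .
qed

lemma continuous_conv_check:
  assumes p: "1 < p" and f: "in_Lp \<mu> p f" and g: "in_Lp \<mu> (conj_exp p) g"
  shows "continuous_on UNIV (conv \<mu> g (check f))"
  unfolding continuous_on_eq_continuous_at[OF open_UNIV]
proof (intro ballI isCont_def[THEN iffD2])
  fix x0 :: 'a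
  have "((\<lambda>x. - x + x0) \<longlongrightarrow> 0) (at x0)"
    using tendsto_add[OF tendsto_minus[OF tendsto_ident_at] tendsto_const, of x0 x0] by simp
  then have "((\<lambda>x. Lp_dist_powr \<mu> p (\<lambda>y. f ((- x + x0) + y)) f) \<longlongrightarrow> 0) (at x0)"
    using filterlim_compose[OF Lp_translation_continuous[OF _ f]] p by simp
  then have "((\<lambda>x. Lp_dist_powr \<mu> p (\<lambda>y. f ((- x + x0) + y)) f powr (1/p)) \<longlongrightarrow> 0) (at x0)"
    by (rule tendsto_zero_powrI[OF _ tendsto_const]) (use p in \<open>auto simp: Lp_dist_powr_nonneg\<close>)
  then have "((\<lambda>x. Lp_dist_powr \<mu> p (\<lambda>y. f ((- x + x0) + y)) f powr (1/p) * Lp_norm \<mu> (conj_exp p) g) \<longlongrightarrow> 0) (at x0)"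
    by (rule tendsto_mult_left_zero)
  moreover have "\<forall>\<^sub>F x in at x0. norm (conv \<mu> g (check f) x - conv \<mu> g (check f) x0)
      \<le> Lp_dist_powr \<mu> p (\<lambda>y. f ((- x + x0) + y)) f powr (1/p) * Lp_norm \<mu> (conj_exp p) g"
    by (intro always_eventually allI conv_check_diff_bound[OF p f g])
  ultimately have "((\<lambda>x. conv \<mu> g (check f) x - conv \<mu> g (check f) x0) \<longlongrightarrow> 0) (at x0)"
    by (rule Lim_null_comparison[rotated])
  then show "(conv \<mu> g (check f) \<longlongrightarrow> conv \<mu> g (check f) x0) (at x0)"
    by (simp add: LIM_zero_iff)
qed

lemma Ap_rep_term_bound:
  assumes "1 < p" and "Ap_rep \<mu> p v f g"
  shows "norm (conv \<mu> (g i) (check (f i)) x) \<le> Lp_norm \<mu> p (f i) * Lp_norm \<mu> (conj_exp p) (g i)"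
  using assms conv_check_bound(2) by (simp add: Ap_rep_def)

lemma norm_le_Ap_rep_sum:
  assumes p: "1 < p" and r: "Ap_rep \<mu> p v f g"
  shows "norm (v x) \<le> (\<Sum>i. Lp_norm \<mu> p (f i) * Lp_norm \<mu> (conj_exp p) (g i))"
proof -
  have s: "summable (\<lambda>i. Lp_norm \<mu> p (f i) * Lp_norm \<mu> (conj_exp p) (g i))"
    using r by (simp add: Ap_rep_def)
  have sn: "summable (\<lambda>i. norm (conv \<mu> (g i) (check (f i)) x))"
    using Ap_rep_term_bound[OF p r] by (intro summable_comparison_test'[OF s]) simp
  have "norm (v x) \<le> (\<Sum>i. norm (conv \<mu> (g i) (check (f i)) x))"
    using r summable_norm[OF sn] by (simp add: Ap_rep_def)
  also have "\<dots> \<le> (\<Sum>i. Lp_norm \<mu> p (f i) * Lp_norm \<mu> (conj_exp p) (g i))"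
    using Ap_rep_term_bound[OF p r] by (intro suminf_le sn s)
  finally show ?thesis .
qed

lemma Ap_norm_le_Ap_rep_sum:
  assumes p: "1 < p" and r: "Ap_rep \<mu> p v f g"
  shows "Ap_norm \<mu> p v \<le> (\<Sum>i. Lp_norm \<mu> p (f i) * Lp_norm \<mu> (conj_exp p) (g i))"
  unfolding Ap_norm_def
proof (rule cInf_lower)
  show "bdd_below {\<Sum>i. Lp_norm \<mu> p (f i) * Lp_norm \<mu> (conj_exp p) (g i) | f g. Ap_rep \<mu> p v f g}"
    using norm_ge_zero norm_le_Ap_rep_sum[OF p] by (intro bdd_belowI[of _ 0]) (blast intro: order_trans)
qed (use r in blast)

lemma norm_le_Ap_norm:
  assumes p: "1 < p" and v: "v \<in> Ap \<mu> p"
  shows "norm (v x) \<le> Ap_norm \<mu> p v"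
  unfolding Ap_norm_def
proof (rule cInf_greatest)
  show "{\<Sum>i. Lp_norm \<mu> p (f i) * Lp_norm \<mu> (conj_exp p) (g i) | f g. Ap_rep \<mu> p v f g} \<noteq> {}"
    using v by (auto simp: Ap_def)
qed (use norm_le_Ap_rep_sum[OF p] in blast)

lemma continuous_Ap:
  assumes p: "1 < p" and v: "v \<in> Ap \<mu> p"
  shows "continuous_on UNIV v"
proof -
  obtain f g where r: "Ap_rep \<mu> p v f g"
    using v unfolding Ap_def by auto
  have "uniform_limit UNIV (\<lambda>n x. \<Sum>i<n. conv \<mu> (g i) (check (f i)) x)
      (\<lambda>x. \<Sum>i. conv \<mu> (g i) (check (f i)) x) sequentially"
    using Ap_rep_term_bound[OF p r] r by (intro Weierstrass_m_test) (auto simp: Ap_rep_def)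
  moreover have "continuous_on UNIV (\<lambda>x. \<Sum>i<n. conv \<mu> (g i) (check (f i)) x)" for n
    using continuous_conv_check[OF p] r by (intro continuous_on_sum) (auto simp: Ap_rep_def)
  ultimately have "continuous_on UNIV (\<lambda>x. \<Sum>i. conv \<mu> (g i) (check (f i)) x)"
    by (intro uniform_limit_theorem[of _ _ sequentially]) auto
  moreover have "v = (\<lambda>x. \<Sum>i. conv \<mu> (g i) (check (f i)) x)"
    using r by (auto simp: Ap_rep_def)
  ultimately show ?thesis
    by simp
qed

lemma conv_check_in_Ap:
  assumes p: "1 < p" and f: "in_Lp \<mu> p f" and g: "in_Lp \<mu> (conj_exp p) g"
  shows "conv \<mu> g (check f) \<in> Ap \<mu> p"
    and "Ap_norm \<mu> p (conv \<mu> g (check f)) \<le> Lp_norm \<mu> p f * Lp_norm \<mu> (conj_exp p) g"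
proof -
  define F where "F i = (if i = 0 then f else (\<lambda>_. 0))" for i :: nat
  define G where "G i = (if i = 0 then g else (\<lambda>_. 0))" for i :: nat
  have norm_sum: "(\<lambda>i. Lp_norm \<mu> p (F i) * Lp_norm \<mu> (conj_exp p) (G i)) sums (Lp_norm \<mu> p f * Lp_norm \<mu> (conj_exp p) g)"
    using sums_single[of 0 "\<lambda>_. Lp_norm \<mu> p f * Lp_norm \<mu> (conj_exp p) g"]
    by (simp add: F_def G_def Lp_norm_def if_distrib cong: if_cong)
  have "(\<lambda>i. conv \<mu> (G i) (check (F i)) x) = (\<lambda>i. if i = 0 then conv \<mu> g (check f) x else 0)" for x
    by (auto simp: F_def G_def conv_def)
  then have conv_sum: "(\<lambda>i. conv \<mu> (G i) (check (F i)) x) sums conv \<mu> g (check f) x" for x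
    using sums_single[of 0 "\<lambda>_. conv \<mu> g (check f) x"] by simp
  have r: "Ap_rep \<mu> p (conv \<mu> g (check f)) F G"
    using f g norm_sum conv_sum unfolding Ap_rep_def by (auto simp: F_def G_def in_Lp_def sums_iff)
  then show "conv \<mu> g (check f) \<in> Ap \<mu> p"
    unfolding Ap_def by blast
  show "Ap_norm \<mu> p (conv \<mu> g (check f)) \<le> Lp_norm \<mu> p f * Lp_norm \<mu> (conj_exp p) g"
    using Ap_norm_le_Ap_rep_sum[OF p r] norm_sum by (simp add: sums_iff)
qed

definition bump :: "'a \<Rightarrow> 'a set \<Rightarrow> 'a \<Rightarrow> complex" where
  "bump x0 V = conv \<mu> (\<lambda>y. complex_of_real (indicator ((\<lambda>z. x0 + z) ` V) y / measure \<mu> V))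
                      (check (\<lambda>y. complex_of_real (indicator V y)))"

lemma bump_eq:
  assumes V: "V \<in> sets borel" "emeasure \<mu> V < \<infinity>"
  shows "bump x0 V x = measure \<mu> ((\<lambda>z. x0 + z) ` V \<inter> (\<lambda>z. x + z) ` V) / measure \<mu> V"
proof -
  have V_translate: "(\<lambda>z. a + z) ` V \<in> sets \<mu>" for a
    using translate_sets V(1) sets_eq_borel by metis
  have "emeasure \<mu> ((\<lambda>z. x0 + z) ` V \<inter> (\<lambda>z. x + z) ` V) \<le> emeasure \<mu> ((\<lambda>z. x0 + z) ` V)"
    using V_translate by (intro emeasure_mono) auto
  also have "\<dots> = emeasure \<mu> V"
    by (rule emeasure_translate[OF V(1)])
  finally have fin: "emeasure \<mu> ((\<lambda>z. x0 + z) ` V \<inter> (\<lambda>z. x + z) ` V) < \<infinity>"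
    using V(2) by (rule le_less_trans)
  have "indicator V (- x + y) = (indicator ((\<lambda>z. x + z) ` V) y :: real)" for y
    by (auto simp: indicator_def image_iff)
  then have "bump x0 V x = (\<integral>y. complex_of_real (indicator ((\<lambda>z. x0 + z) ` V \<inter> (\<lambda>z. x + z) ` V) y / measure \<mu> V) \<partial>\<mu>)"
    unfolding bump_def conv_check by (intro Bochner_Integration.integral_cong) (auto simp: indicator_inter_arith)
  also have "\<dots> = measure \<mu> ((\<lambda>z. x0 + z) ` V \<inter> (\<lambda>z. x + z) ` V) / measure \<mu> V"
    using fin V_translate by simp
  finally show ?thesis .
qed

lemma
  assumes V: "open V" "V \<noteq> {}" "emeasure \<mu> V < \<infinity>"
  shows bump_at_center: "bump x0 V x0 = 1"
    and bump_eq_0: "(\<lambda>z. x0 + z) ` V \<inter> (\<lambda>z. x + z) ` V = {} \<Longrightarrow> bump x0 V x = 0"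
proof -
  have "emeasure \<mu> V = ennreal (measure \<mu> V)"
    using V(3) by (intro emeasure_eq_ennreal_measure) simp
  then have "0 < measure \<mu> V"
    using emeasure_open_pos[OF V(1,2)] by simp
  then show "bump x0 V x0 = 1"
    using bump_eq[of V x0 x0] V measure_translate[of V x0] by simp
  show "bump x0 V x = 0" if "(\<lambda>z. x0 + z) ` V \<inter> (\<lambda>z. x + z) ` V = {}"
    using bump_eq[of V x0 x] V that by simp
qed

lemma bump_in_Ap:
  assumes p: "1 < p" and V: "open V" "V \<noteq> {}" "emeasure \<mu> V < \<infinity>"
  shows "bump x0 V \<in> Ap \<mu> p" and "Ap_norm \<mu> p (bump x0 V) \<le> 1"
proof -
  define q where "q = conj_exp p"
  define m where "m = measure \<mu> V"
  define A where "A = (\<lambda>z. x0 + z) ` V"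
  have pq: "1 < q" "1/p + 1/q = 1"
    using conj_exp_gt_1[OF p] conj_exp_conjugate[OF p] by (simp_all add: q_def)
  have "emeasure \<mu> V = ennreal m"
    using V(3) unfolding m_def by (intro emeasure_eq_ennreal_measure) simp
  then have "0 < m"
    using emeasure_open_pos[OF V(1,2)] by simp
  have sets: "V \<in> sets \<mu>" "A \<in> sets \<mu>"
    using V(1) sets_eq_borel translate_sets by (auto simp: A_def)
  have A: "emeasure \<mu> A < \<infinity>" "measure \<mu> A = m"
    using emeasure_translate[OF borel_open[OF V(1)]] measure_translate[OF borel_open[OF V(1)]] V(3)
    by (simp_all add: A_def m_def)
  have "0 < p" "0 < q"
    using p pq by simp_all
  note f = Lp_norm_indicator[OF sets(1) V(3) \<open>0 < p\<close>, of 1, simplified]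
  note g = Lp_norm_indicator[OF sets(2) A(1) \<open>0 < q\<close>, of "1 / m"]
  have "Lp_norm \<mu> p (\<lambda>y. complex_of_real (indicator V y)) * Lp_norm \<mu> q (\<lambda>y. complex_of_real (1 / m * indicator A y))
      = m powr (1/p + 1/q) / m"
    using f(2) g(2) A(2) \<open>0 < m\<close> by (simp add: m_def powr_add)
  also have "\<dots> = 1"
    using \<open>0 < m\<close> pq by simp
  finally have "Lp_norm \<mu> p (\<lambda>y. complex_of_real (indicator V y)) * Lp_norm \<mu> q (\<lambda>y. complex_of_real (1 / m * indicator A y)) = 1" .
  moreover have "bump x0 V = conv \<mu> (\<lambda>y. complex_of_real (1 / m * indicator A y)) (check (\<lambda>y. complex_of_real (indicator V y)))"
    by (simp add: bump_def A_def m_def)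
  ultimately show "bump x0 V \<in> Ap \<mu> p" and "Ap_norm \<mu> p (bump x0 V) \<le> 1"
    using conv_check_in_Ap[OF p f(1) g(1)[unfolded q_def]] by (simp_all add: q_def)
qed

section \<open>The weak topology of \<open>A\<^sub>p\<close>\<close>

lemma eval_in_Ap_dual:
  assumes "1 < p"
  shows "(\<lambda>v. v x) \<in> Ap_dual \<mu> p"
  unfolding Ap_dual_def using norm_le_Ap_norm[OF assms] by (auto intro!: exI[of _ 1])

lemma openin_Ap_weak_eval:
  assumes "1 < p" and "open U"
  shows "openin (Ap_weak \<mu> p) {v \<in> Ap \<mu> p. v x \<in> U}"
  unfolding Ap_weak_def
proof (rule topology_generated_by_Basis, rule CollectI, intro exI conjI)
  show "{v \<in> Ap \<mu> p. v x \<in> U} = {v \<in> Ap \<mu> p. (\<lambda>v. v x) v \<in> U}"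
    by simp
qed (use eval_in_Ap_dual[OF assms(1)] assms(2) in auto)

lemma topspace_Ap_weak:
  assumes "1 < p"
  shows "topspace (Ap_weak \<mu> p) = Ap \<mu> p"
proof
  show "topspace (Ap_weak \<mu> p) \<subseteq> Ap \<mu> p"
    unfolding Ap_weak_def topology_generated_by_topspace by blast
  show "Ap \<mu> p \<subseteq> topspace (Ap_weak \<mu> p)"
    using openin_subset[OF openin_Ap_weak_eval[OF assms open_UNIV, of 0]] by simp
qed

lemma Ap_weak_closure_eval:
  assumes p: "1 < p" and w: "w \<in> Ap_weak \<mu> p closure_of E" and E: "\<And>e. e \<in> E \<Longrightarrow> e x = c"
  shows "w x = c"
proof (rule ccontr)
  define Nbhd where "Nbhd = {v \<in> Ap \<mu> p. v x \<in> - {c}}"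
  assume "w x \<noteq> c"
  moreover have "w \<in> Ap \<mu> p"
    using w topspace_Ap_weak[OF p] by (simp add: in_closure_of)
  ultimately have "w \<in> Nbhd"
    by (simp add: Nbhd_def)
  moreover have "openin (Ap_weak \<mu> p) Nbhd"
    unfolding Nbhd_def by (rule openin_Ap_weak_eval[OF p open_Compl[OF closed_singleton]])
  ultimately obtain e where "e \<in> E" "e \<in> Nbhd"
    using w unfolding in_closure_of by blast
  then show False
    using E by (auto simp: Nbhd_def)
qed

section \<open>Weakly compact multipliers\<close>

definition finite_nhds_0 :: "'a set set" where
  "finite_nhds_0 = {V. open V \<and> 0 \<in> V \<and> emeasure \<mu> V < \<infinity>}"

lemma obtain_finite_nhd_0:
  obtains N where "N \<in> finite_nhds_0"
proof -
  obtain N0 N :: "'a set" where N0: "open N0" "compact N" "0 \<in> N0" "N0 \<subseteq> N"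
    by (rule locally_compact_obtain_compact_nhd[OF locally_compact])
  have "emeasure \<mu> N0 \<le> emeasure \<mu> N"
    using N0 sets_eq_borel by (intro emeasure_mono) (auto simp: borel_compact)
  also have "\<dots> < \<infinity>"
    by (rule emeasure_compact_finite[OF N0(2)])
  finally show thesis
    using that[of N0] N0 by (simp add: finite_nhds_0_def)
qed

lemma finite_nhds_0_Int:
  assumes "V \<in> finite_nhds_0" and "open W" and "0 \<in> W"
  shows "V \<inter> W \<in> finite_nhds_0"
proof -
  have "emeasure \<mu> (V \<inter> W) \<le> emeasure \<mu> V"
    using assms sets_eq_borel by (intro emeasure_mono) (auto simp: finite_nhds_0_def)
  then show ?thesis
    using assms by (auto simp: finite_nhds_0_def)
qed

lemma bump_finite_nhd_0:
  assumes "1 < p" and "V \<in> finite_nhds_0"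
  shows "bump x0 V \<in> Ap \<mu> p" "Ap_norm \<mu> p (bump x0 V) \<le> 1" "bump x0 V x0 = 1"
    and "(\<lambda>z. x0 + z) ` V \<inter> (\<lambda>z. x + z) ` V = {} \<Longrightarrow> bump x0 V x = 0"
proof -
  have V: "open V" "V \<noteq> {}" "emeasure \<mu> V < \<infinity>"
    using assms(2) by (auto simp: finite_nhds_0_def)
  show "bump x0 V \<in> Ap \<mu> p" "Ap_norm \<mu> p (bump x0 V) \<le> 1"
    by (rule bump_in_Ap[OF assms(1) V])+
  show "bump x0 V x0 = 1"
    by (rule bump_at_center[OF V])
  show "(\<lambda>z. x0 + z) ` V \<inter> (\<lambda>z. x + z) ` V = {} \<Longrightarrow> bump x0 V x = 0"
    by (rule bump_eq_0[OF V])
qed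

lemma weak_cluster_point_of_bumps:
  assumes p: "1 < p" and u: "u \<in> Bp \<mu> p"
    and wc: "Ap_weakly_compact_op \<mu> p (\<lambda>v x. u x * v x)"
  obtains w where "w \<in> Ap \<mu> p"
    "\<And>V. V \<in> finite_nhds_0 \<Longrightarrow>
       w \<in> Ap_weak \<mu> p closure_of ((\<lambda>v x. u x * v x) ` bump x0 ` {W \<in> finite_nhds_0. W \<subseteq> V})"
proof -
  let ?X = "Ap_weak \<mu> p"
  let ?T = "\<lambda>v x. u x * v x"
  define S where "S = ?X closure_of (?T ` {v \<in> Ap \<mu> p. Ap_norm \<mu> p v \<le> 1})"
  define F where "F V = ?X closure_of (?T ` bump x0 ` {W \<in> finite_nhds_0. W \<subseteq> V})" for V
  obtain N where N: "N \<in> finite_nhds_0"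
    by (rule obtain_finite_nhd_0)
  have "S \<inter> \<Inter> (F ` finite_nhds_0) \<noteq> {}"
  proof (rule compactin_directed_Inter_nonempty)
    show "compactin ?X S"
      using wc unfolding Ap_weakly_compact_op_def S_def .
    show "closedin ?X (F V)" for V
      by (simp add: F_def)
    fix J
    assume "finite J" "J \<subseteq> finite_nhds_0"
    define W0 where "W0 = N \<inter> \<Inter> J"
    have W0: "W0 \<in> finite_nhds_0"
      unfolding W0_def using \<open>finite J\<close> \<open>J \<subseteq> finite_nhds_0\<close>
      by (intro finite_nhds_0_Int[OF N]) (auto simp: finite_nhds_0_def)
    have "?T (bump x0 W0) \<in> topspace ?X"
      using u bump_finite_nhd_0(1)[OF p W0] topspace_Ap_weak[OF p] by (simp add: Bp_def)
    then have "?T (bump x0 W0) \<in> S" "?T (bump x0 W0) \<in> F W0"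
      unfolding S_def F_def using bump_finite_nhd_0(1,2)[OF p W0] W0
      by (auto intro!: in_closure_of[THEN iffD2])
    moreover have "F W0 \<subseteq> \<Inter> (F ` J)"
      unfolding F_def W0_def by (intro INF_greatest closure_of_mono image_mono) auto
    ultimately show "\<exists>V\<in>finite_nhds_0. F V \<subseteq> \<Inter> (F ` J) \<and> S \<inter> F V \<noteq> {}"
      using W0 by blast
  qed
  then obtain w where "w \<in> S" "\<And>V. V \<in> finite_nhds_0 \<Longrightarrow> w \<in> F V"
    by blast
  moreover have "w \<in> Ap \<mu> p"
    using \<open>w \<in> S\<close> topspace_Ap_weak[OF p] by (simp add: S_def in_closure_of)
  ultimately show thesis
    using that by (simp add: F_def)
qed

lemma weakly_compact_multiplier_spike:
  assumes p: "1 < p" and u: "u \<in> Bp \<mu> p"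
    and wc: "Ap_weakly_compact_op \<mu> p (\<lambda>v x. u x * v x)"
  obtains w where "w \<in> Ap \<mu> p" "w x0 = u x0" "\<And>x. x \<noteq> x0 \<Longrightarrow> w x = 0"
proof -
  obtain w where w: "w \<in> Ap \<mu> p"
    and cluster: "\<And>V. V \<in> finite_nhds_0 \<Longrightarrow>
       w \<in> Ap_weak \<mu> p closure_of ((\<lambda>v x. u x * v x) ` bump x0 ` {W \<in> finite_nhds_0. W \<subseteq> V})"
    using weak_cluster_point_of_bumps[OF p u wc] by blast
  obtain N where N: "N \<in> finite_nhds_0"
    by (rule obtain_finite_nhd_0)
  have "w x0 = u x0"
  proof (rule Ap_weak_closure_eval[OF p cluster[OF N]])
    fix e
    assume "e \<in> (\<lambda>v x. u x * v x) ` bump x0 ` {W \<in> finite_nhds_0. W \<subseteq> N}"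
    then obtain W where "W \<in> finite_nhds_0" "e = (\<lambda>x. u x * bump x0 W x)"
      by blast
    then show "e x0 = u x0"
      using bump_finite_nhd_0(3)[OF p] by simp
  qed
  moreover have "w x = 0" if ne: "x \<noteq> x0" for x
  proof -
    obtain A B where AB: "open A" "open B" "x0 \<in> A" "x \<in> B" "A \<inter> B = {}"
      using hausdorff[OF not_sym[OF ne]] by blast
    define V where "V = N \<inter> ((\<lambda>z. x0 + z) -` A \<inter> (\<lambda>z. x + z) -` B)"
    have V: "V \<in> finite_nhds_0"
      unfolding V_def using AB by (intro finite_nhds_0_Int[OF N] open_Int open_vimage continuous_intros) auto
    show "w x = 0"
    proof (rule Ap_weak_closure_eval[OF p cluster[OF V]])
      fix e
      assume "e \<in> (\<lambda>v x. u x * v x) ` bump x0 ` {W \<in> finite_nhds_0. W \<subseteq> V}"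
      then obtain W where W: "W \<in> finite_nhds_0" "W \<subseteq> V" "e = (\<lambda>x. u x * bump x0 W x)"
        by blast
      have "(\<lambda>z. x0 + z) ` W \<subseteq> A" "(\<lambda>z. x + z) ` W \<subseteq> B"
        using W(2) by (auto simp: V_def)
      then have "(\<lambda>z. x0 + z) ` W \<inter> (\<lambda>z. x + z) ` W = {}"
        using AB(5) by blast
      then show "e x = 0"
        using bump_finite_nhd_0(4)[OF p W(1)] W(3) by simp
    qed
  qed
  ultimately show thesis
    using that w by blast
qed

lemma open_singleton_if_Ap_spike:
  assumes "1 < p" and "w \<in> Ap \<mu> p" and "w x0 \<noteq> 0" and "\<And>x. x \<noteq> x0 \<Longrightarrow> w x = 0"
  shows "open {x0}"
proof -
  have "{x0} = w -` (- {0})"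
    using assms(3,4) by auto
  then show ?thesis
    using open_vimage[OF open_Compl[OF closed_singleton] continuous_Ap[OF assms(1,2)]] by simp
qed

end

theorem lemma4p1:
  fixes \<mu> :: "'a::{topological_group_add, t2_space} measure"
    and p :: real
    and u :: "'a \<Rightarrow> complex"
  assumes "lc_group TYPE('a)"
    and "left_haar \<mu>"
    and "1 < p"
    and "u \<in> Bp \<mu> p"
    and "u \<noteq> (\<lambda>x. 0)"
    and "Ap_weakly_compact_op \<mu> p (\<lambda>v x. u x * v x)"
  shows "\<forall>x::'a. open {x}"
proof
  fix x :: 'a
  interpret lc_haar \<mu>
    using assms(1,2) by (rule lc_haarI)
  obtain x0 where "u x0 \<noteq> 0"
    using assms(5) by auto
  obtain w where "w \<in> Ap \<mu> p" "w x0 = u x0" "\<And>x. x \<noteq> x0 \<Longrightarrow> w x = 0"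
    using weakly_compact_multiplier_spike[OF assms(3,4,6)] by blast
  then have "open {x0}"
    using open_singleton_if_Ap_spike[OF assms(3)] \<open>u x0 \<noteq> 0\<close> by simp
  then show "open {x}"
    by (rule open_singletons_if_open_singleton)
qed

end
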